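(* Let $\{X_k(m): m\in\mathbb{R}_+,\ k\in\mathbb{N}\}$ be a family of integrable real random variables that are independent in $k$. Assume: (C) $\mathbb{E}[X_k(m)]=0$ for all $m,k$; (S1) there is $\delta>0$ such that for every $\varepsilon>0$ there is $C=C(\varepsilon)$ with $\sup_k\mathbb{P}(|X_k(m)|>\varepsilon)<C/m^{\delta}$ for all $m$; (S2) there are a random variable $X_*$ and $\gamma>0$ with $\mathbb{E}[|X_*|^{2+\gamma}]<\infty$ and $\sup_{k,m}\mathbb{P}(X_k(m)>x)\le\mathbb{P}(X_*>x)$ for all $x\in\mathbb{R}$; (S3) for every $\varepsilon>0$ there are $\beta>1$ and $C_\varepsilon>0$ such that for all $t,r,m>0$, $\sup_k\mathbb{P}\big(\sup_{s\le m}|(r+s)X_k(r+s)-rX_k(r)|\ge t\varepsilon\big)\le C_\varepsilon m^\beta/t^\beta$. Let $(m_k)_{k\in\mathbb N}$ be any sequence of positive reals with $\sum_k m_k=\infty$, let $M_0=0$, $M_n=\sum_{k=1}^n m_k$, and for $t>0$ let $\ell_t=\inf\{\ell\in\mathbb N: M_\ell\ge t\}$, $\bar t=t-M_{\ell_t-1}$, and $\mathcal S_t=\sum_{k=1}^{\ell_t-1}\frac{m_k}{t}X_k(m_k)+\frac{\bar t}{t}X_{\ell_t}(\bar t)$. Then $\mathbb{P}(\lim_{t\to\infty}\mathcal S_t=0)=1$.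
   Context: $\mathbb{R}_+$ denotes the positive reals. "Independent in $k$" means that the families $\{X_k(m): m\in\mathbb{R}_+\}$ for different $k$ are independent. *)

theory Defs
  imports "HOL-Probability.Probability"
begin

definition Mpart :: "(nat \<Rightarrow> real) \<Rightarrow> nat \<Rightarrow> real" where
  "Mpart ms n = (\<Sum>k=1..n. ms k)"

definition ell :: "(nat \<Rightarrow> real) \<Rightarrow> real \<Rightarrow> nat" where
  "ell ms t = (LEAST l. Mpart ms l \<ge> t)"

definition tbar :: "(nat \<Rightarrow> real) \<Rightarrow> real \<Rightarrow> real" where
  "tbar ms t = t - Mpart ms (ell ms t - 1)"

definition St :: "(nat \<Rightarrow> real \<Rightarrow> 'a \<Rightarrow> real) \<Rightarrow> (nat \<Rightarrow> real) \<Rightarrow> real \<Rightarrow> 'a \<Rightarrow> real" where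
  "St X ms t \<omega> = (\<Sum>k=1..ell ms t - 1. ms k / t * X k (ms k) \<omega>)
      + tbar ms t / t * X (ell ms t) (tbar ms t) \<omega>"

end

theory Submission
  imports Defs
begin

text \<open>
  Write \<open>t * S\<^sub>t\<close> as the block sum of \<open>m\<^sub>k * X\<^sub>k(m\<^sub>k)\<close> over \<open>k < l\<^sub>t\<close> plus \<open>tbar * X\<^sub>l\<^sub>t(tbar)\<close>.
  Letting the left end point of the increments in (S3) tend to 0, and using the \<open>L\<^sup>1\<close> bound that
  (S2) gives for centred variables, yields a uniform tail bound \<open>P(\<bar>X\<^sub>k(c)\<bar> > x) = O(x powr -\<beta>)\<close>
  with \<open>1 < \<beta> < 2\<close>. At a fixed time \<open>T\<close> the summands are independent and centred: after
  truncation at level \<open>T\<close>, Chebyshev's inequality controls the weights \<open>m\<^sub>k \<le> T powr a\<close> and (S1)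
  the few larger ones, so \<open>\<bar>T * S\<^sub>T\<bar> \<le> 2 \<epsilon> T + o(T)\<close> fails only with probability
  \<open>O(T powr -\<kappa>)\<close>. Between consecutive points \<open>T < T'\<close> of the grid \<open>(j + 1) powr p\<close>, the
  difference \<open>t * S\<^sub>t - T * S\<^sub>T\<close> is controlled by increments from (S3) and by the \<open>L\<^sup>1\<close> bound on the
  blocks completed in \<open>[T, T')\<close>. The error probabilities are summable in \<open>j\<close>, so by
  Borel--Cantelli \<open>limsup \<bar>S\<^sub>t\<bar> \<le> 8 \<epsilon>\<close> almost surely, for every \<open>\<epsilon> > 0\<close>.
\<close>

lemma exists_dyadic_bracket_above:
  fixes y z :: real assumes "y > 0" "y < z"
  shows "\<exists>n. y * 2^n < z \<and> z \<le> y * 2^Suc n"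
proof -
  obtain k where "z / y < 2^k" using real_arch_pow[of 2 "z / y"] by auto
  then have ex: "\<exists>n. z \<le> y * 2^Suc n"
    using assms by (intro exI[of _ k]) (auto simp: field_simps)
  define N where "N = (LEAST n. z \<le> y * 2^Suc n)"
  have N: "z \<le> y * 2^Suc N" unfolding N_def by (rule LeastI_ex[OF ex])
  show ?thesis
  proof (cases N)
    case 0 with N assms show ?thesis by (intro exI[of _ 0]) auto
  next
    case (Suc m)
    then have "\<not> z \<le> y * 2^Suc m" using not_less_Least[of m "\<lambda>n. z \<le> y * 2^Suc n"]
      unfolding N_def by auto
    with N Suc show ?thesis by (intro exI[of _ N]) auto
  qed
qed

lemma exists_dyadic_bracket_below:
  fixes y z :: real assumes "y > 0" "0 < z" "z \<le> y"
  shows "\<exists>n. y / 2^Suc n < z \<and> z \<le> y / 2^n"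
proof -
  obtain k where "y / z < 2^k" using real_arch_pow[of 2 "y / z"] by auto
  then have ex: "\<exists>n. y / 2^Suc n < z"
    using assms by (intro exI[of _ k]) (auto simp: field_simps)
  define N where "N = (LEAST n. y / 2^Suc n < z)"
  have N: "y / 2^Suc N < z" unfolding N_def by (rule LeastI_ex[OF ex])
  show ?thesis
  proof (cases N)
    case 0 with N assms show ?thesis by (intro exI[of _ 0]) auto
  next
    case (Suc m)
    then have "\<not> y / 2^Suc m < z" using not_less_Least[of m "\<lambda>n. y / 2^Suc n < z"]
      unfolding N_def by auto
    with N Suc show ?thesis by (intro exI[of _ N]) auto
  qed
qed

lemma dyadic_upper_tail_sums:
  fixes y A \<beta> :: real assumes y: "y > 0" and \<beta>: "\<beta> > 1"
  shows "(\<lambda>n. y * 2^Suc n * (A * (y * 2^n) powr -\<beta>))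
           sums (2 * A * y powr (1 - \<beta>) / (1 - 2 powr (1 - \<beta>)))"
proof -
  have q: "2 powr (1 - \<beta>) < 1" using \<beta> by (simp add: powr_less_one)
  have eq: "y * 2^Suc n * (A * (y * 2^n) powr -\<beta>) = 2 * A * y powr (1 - \<beta>) * (2 powr (1 - \<beta>))^n" for n
  proof -
    have "(2::real)^n = 2 powr (real n)" by (simp add: powr_realpow)
    then have "(y * 2^n) powr -\<beta> = y powr -\<beta> * (2 powr -\<beta>)^n"
      using y by (simp add: powr_mult powr_powr powr_power mult.commute)
    moreover have "(2 powr (1 - \<beta>))^n = 2^n * (2 powr -\<beta>)^n"
      using powr_add[of 2 1 "-\<beta>"] by (simp add: power_mult_distrib)
    moreover have "y powr (1 - \<beta>) = y * y powr -\<beta>"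
      using y by (simp add: powr_diff powr_minus divide_inverse)
    ultimately show ?thesis by (simp add: algebra_simps)
  qed
  show ?thesis unfolding eq
    using sums_mult[OF geometric_sums[of "2 powr (1 - \<beta>)"], of "2 * A * y powr (1 - \<beta>)"] q
    by (simp add: divide_inverse)
qed

lemma dyadic_lower_tail_sums:
  fixes y A \<beta> :: real assumes y: "y > 0" and \<beta>: "\<beta> < 2"
  shows "(\<lambda>n. (y / 2^n)^2 * (A * (y / 2^Suc n) powr -\<beta>))
           sums (A * 2 powr \<beta> * y powr (2 - \<beta>) / (1 - 2 powr (\<beta> - 2)))"
proof -
  have q: "2 powr (\<beta> - 2) < 1" using \<beta> by (simp add: powr_less_one)
  have eq: "(y / 2^n)^2 * (A * (y / 2^Suc n) powr -\<beta>)
      = A * 2 powr \<beta> * y powr (2 - \<beta>) * (2 powr (\<beta> - 2))^n" for n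
  proof -
    have "(2::real)^Suc n = 2 powr (real (Suc n))" by (subst powr_realpow) auto
    then have "((2::real)^Suc n) powr \<beta> = 2 powr (\<beta> + real n * \<beta>)"
      by (simp add: powr_powr algebra_simps del: power_Suc)
    also have "\<dots> = 2 powr \<beta> * (2 powr \<beta>)^n" by (simp add: powr_add powr_power)
    finally have P: "((2::real)^Suc n) powr \<beta> = 2 powr \<beta> * (2 powr \<beta>)^n" .
    have "(y / 2^Suc n) powr -\<beta> = y powr -\<beta> / (2^Suc n) powr -\<beta>"
      by (rule powr_divide; use y in auto)
    also have "\<dots> = y powr -\<beta> * 2 powr \<beta> * (2 powr \<beta>)^n"
      unfolding powr_minus[of "(2::real)^Suc n"] P by (simp add: divide_inverse mult.assoc)
    finally have a: "(y / 2^Suc n) powr -\<beta> = y powr -\<beta> * 2 powr \<beta> * (2 powr \<beta>)^n" .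
    have "2 powr (\<beta> - 2) * 4 = 2 powr \<beta>" using powr_add[of 2 "\<beta> - 2" 2] by simp
    then have q: "(2 powr (\<beta> - 2))^n = (2 powr \<beta>)^n / 4^n"
      by (metis power_mult_distrib nonzero_eq_divide_eq power_not_zero zero_neq_numeral)
    have "((2::real)^n)^2 = (2^2)^n" by (simp only: power_mult[symmetric] mult.commute)
    then have s: "(y / 2^n)^2 = y^2 / 4^n" by (simp add: power_divide)
    have c: "y powr (2 - \<beta>) = y^2 * y powr -\<beta>"
      using y by (simp add: powr_diff powr_minus divide_inverse)
    show ?thesis unfolding s q a c by (simp add: field_simps)
  qed
  show ?thesis unfolding eq
    using sums_mult[OF geometric_sums[of "2 powr (\<beta> - 2)"], of "A * 2 powr \<beta> * y powr (2 - \<beta>)"] q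
    by (simp add: divide_inverse)
qed

lemma powr_le_self_mult_powr:
  fixes x e \<beta> :: real
  assumes "0 \<le> x" "x \<le> e" "1 \<le> \<beta>"
  shows "x powr \<beta> \<le> x * e powr (\<beta> - 1)"
proof (cases "x = 0")
  case False
  then have "x powr \<beta> = x * x powr (\<beta> - 1)"
    using assms powr_add[of x 1 "\<beta> - 1"] by simp
  also have "\<dots> \<le> x * e powr (\<beta> - 1)"
    using assms by (intro mult_left_mono powr_mono2) auto
  finally show ?thesis .
qed simp

lemma powr_neg_le_of_powr_less:
  fixes c T a \<delta> :: real
  assumes c: "T powr a < c" and T: "T > 0" and \<delta>: "\<delta> \<ge> 0"
  shows "c powr -\<delta> \<le> c * T powr (-a - a * \<delta>)"
proof -
  have c_pos: "c > 0" using c powr_gt_zero[of T a] T by linarith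
  have "c powr -\<delta> \<le> (T powr a) powr -\<delta>"
    using c \<delta> T by (intro powr_mono2') auto
  also have "\<dots> = T powr (-a * \<delta>)" by (simp add: powr_powr)
  also have "\<dots> \<le> (c * T powr -a) * T powr (-a * \<delta>)"
  proof -
    have "T powr a * T powr -a = 1" using T by (simp add: powr_add[symmetric])
    then have "1 \<le> c * T powr -a"
      using c by (metis less_eq_real_def mult_right_mono powr_ge_zero)
    then show ?thesis by (simp add: mult_le_cancel_right1)
  qed
  also have "\<dots> = c * T powr (-a - a * \<delta>)" by (simp add: powr_add[symmetric] mult.assoc)
  finally show ?thesis .
qed

lemma sum_powr_le_powr_sum:
  fixes f :: "'b \<Rightarrow> real"
  assumes A: "finite A" and f: "\<And>a. a \<in> A \<Longrightarrow> f a \<ge> 0" and \<beta>: "\<beta> \<ge> 1"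
  shows "(\<Sum>a\<in>A. f a powr \<beta>) \<le> (\<Sum>a\<in>A. f a) powr \<beta>"
proof -
  let ?S = "\<Sum>a\<in>A. f a"
  have "(\<Sum>a\<in>A. f a powr \<beta>) \<le> (\<Sum>a\<in>A. f a * ?S powr (\<beta> - 1))"
    using A f \<beta> by (intro sum_mono powr_le_self_mult_powr member_le_sum) auto
  also have "\<dots> = ?S * ?S powr (\<beta> - 1)" by (simp add: sum_distrib_right)
  also have "\<dots> = ?S powr \<beta>"
    using powr_add[of ?S 1 "\<beta> - 1"] sum_nonneg[of A f] f by (cases "?S = 0") auto
  finally show ?thesis .
qed

lemma sum_powr_small_weights_le:
  fixes c :: "nat \<Rightarrow> real" and T a \<beta> :: real
  assumes K: "finite K" and c: "\<And>k. k \<in> K \<Longrightarrow> 0 < c k \<and> c k \<le> T powr a" and sum_c: "sum c K \<le> T"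
    and T: "T > 0" and \<beta>: "\<beta> \<ge> 1"
  shows "(\<Sum>k\<in>K. (c k / T) powr \<beta>) \<le> T powr ((a - 1) * (\<beta> - 1))"
proof -
  have "(\<Sum>k\<in>K. (c k / T) powr \<beta>) \<le> (\<Sum>k\<in>K. c k / T * (T powr (a - 1)) powr (\<beta> - 1))"
  proof (intro sum_mono powr_le_self_mult_powr)
    fix k assume "k \<in> K"
    then show "0 \<le> c k / T" "c k / T \<le> T powr (a - 1)"
      using c T by (auto simp: powr_diff divide_right_mono less_imp_le)
  qed (use \<beta> in simp)
  also have "\<dots> = sum c K / T * T powr ((a - 1) * (\<beta> - 1))"
    by (simp add: powr_powr sum_distrib_right sum_divide_distrib)
  also have "\<dots> \<le> 1 * T powr ((a - 1) * (\<beta> - 1))"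
    using sum_c T by (intro mult_right_mono) auto
  finally show ?thesis by simp
qed

lemma le_max_mult_powr_of_le_powr:
  fixes P C x \<beta> \<beta>' :: real
  assumes P: "0 \<le> P" "P \<le> 1" "P \<le> C * x powr \<beta>'" and x: "x > 0" and \<beta>: "0 \<le> \<beta>" "\<beta> \<le> \<beta>'"
  shows "P \<le> max C 1 * x powr \<beta>"
proof (cases "x \<le> 1")
  case True
  have "0 \<le> C * x powr \<beta>'" using P by linarith
  then have "C \<ge> 0" using x by (simp add: zero_le_mult_iff)
  then have "C * x powr \<beta>' \<le> max C 1 * x powr \<beta>"
    using True x \<beta> by (intro mult_mono powr_mono') auto
  then show ?thesis using P by linarith
next
  case False
  then have "1 \<le> x powr \<beta>" using \<beta> by (intro ge_one_powr_ge_zero) auto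
  also have "\<dots> \<le> max C 1 * x powr \<beta>" by (simp add: mult_le_cancel_right1)
  finally show ?thesis using P by linarith
qed

lemma exp_minus_one_le: "exp x - 1 \<le> x * exp (x::real)"
proof -
  have "(1 - x) * exp x \<le> exp (-x) * exp x"
    using exp_ge_add_one_self[of "-x"] by (intro mult_right_mono) auto
  then show ?thesis by (simp add: exp_minus field_simps)
qed

lemma Suc_ratio_powr_le:
  fixes p :: real and j :: nat assumes p: "p \<ge> 1"
  shows "((real j + 2) / (real j + 1)) powr p - 1 \<le> p * exp p / (real j + 1)"
proof -
  define y where "y = 1 / (real j + 1)"
  have y: "0 < y" "y \<le> 1" unfolding y_def by (auto simp: field_simps)
  have "(real j + 2) / (real j + 1) = 1 + y" unfolding y_def by (simp add: field_simps)
  then have "((real j + 2) / (real j + 1)) powr p = exp (p * ln (1 + y))"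
    using y by (simp add: powr_def)
  also have "\<dots> \<le> exp (p * y)"
    using y p by (intro exp_le_cancel_iff[THEN iffD2] mult_left_mono ln_add_one_self_le_self) auto
  finally have "((real j + 2) / (real j + 1)) powr p - 1 \<le> exp (p * y) - 1" by simp
  also have "\<dots> \<le> (p * y) * exp (p * y)" by (rule exp_minus_one_le)
  also have "\<dots> \<le> (p * y) * exp p"
    using y p by (intro mult_left_mono) (auto simp: mult_le_cancel_left1)
  finally show ?thesis unfolding y_def by simp
qed

lemma exists_block_containing:
  fixes \<tau> :: "nat \<Rightarrow> real"
  assumes "mono \<tau>" and "\<And>n. real n \<le> \<tau> n" and "\<tau> J \<le> t"
  shows "\<exists>j\<ge>J. \<tau> j \<le> t \<and> t < \<tau> (Suc j)"
proof -
  obtain n :: nat where "t < real n" using reals_Archimedean2 by blast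
  then have ex: "\<exists>n. t < \<tau> n" using assms(2) by (meson less_le_trans)
  define N where "N = (LEAST n. t < \<tau> n)"
  have N: "t < \<tau> N" unfolding N_def by (rule LeastI_ex[OF ex])
  have "J < N"
  proof (rule ccontr)
    assume "\<not> J < N"
    then have "\<tau> N \<le> \<tau> J" using assms(1) by (auto simp: mono_def)
    then show False using N assms(3) by linarith
  qed
  then obtain j where j: "N = Suc j" by (cases N) auto
  have "\<not> t < \<tau> j" using not_less_Least[of j "\<lambda>n. t < \<tau> n"] j unfolding N_def by auto
  then show ?thesis using j N \<open>J < N\<close> by (intro exI[of _ j]) auto
qed

lemma suminf_indicator_greaterThan_real:
  "(\<Sum>n. indicator {real n<..} x :: ennreal) = ennreal (real (nat \<lceil>x\<rceil>))"
proof -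
  have "(\<Sum>n. indicator {real n<..} x :: ennreal) = (\<Sum>n\<in>{..<nat \<lceil>x\<rceil>}. indicator {real n<..} x)"
  proof (rule suminf_finite)
    fix n assume "n \<notin> {..<nat \<lceil>x\<rceil>}"
    then have "x \<le> real n" by (auto simp: not_less nat_le_iff ceiling_le_iff)
    then show "(indicator {real n<..} x :: ennreal) = 0" by auto
  qed simp
  also have "\<dots> = (\<Sum>n\<in>{..<nat \<lceil>x\<rceil>}. (1::ennreal))"
  proof (intro sum.cong refl)
    fix n assume "n \<in> {..<nat \<lceil>x\<rceil>}"
    then have "int n < \<lceil>x\<rceil>" by auto
    then have "of_int (int n) < x" by (simp only: less_ceiling_iff)
    then have "real n < x" by simp
    then show "(indicator {real n<..} x :: ennreal) = 1" by auto
  qed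
  also have "\<dots> = ennreal (real (nat \<lceil>x\<rceil>))" by (simp add: ennreal_of_nat_eq_real_of_nat)
  finally show ?thesis .
qed

section \<open>Tails, truncation and sums of independent variables\<close>

lemma integrable_abs_of_integrable_powr:
  fixes N :: "real measure"
  assumes N: "finite_measure N" "sets N = sets borel" and p: "p \<ge> 1"
    and int: "integrable N (\<lambda>x. \<bar>x\<bar> powr p)"
  shows "integrable N (\<lambda>x. \<bar>x\<bar>)"
proof -
  interpret N: finite_measure N by (rule N(1))
  have meas_N: "measurable N = measurable borel" by (rule ext measurable_cong_sets)+ (use N in auto)
  have abs_meas: "(\<lambda>x::real. \<bar>x\<bar>) \<in> borel_measurable N" unfolding meas_N by measurable
  show ?thesis
  proof (rule Bochner_Integration.integrable_bound[OF
        Bochner_Integration.integrable_add[OF int N.integrable_const[of 1]] abs_meas])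
    show "AE x in N. norm \<bar>x\<bar> \<le> norm (\<bar>x\<bar> powr p + 1)"
    proof (intro AE_I2)
      fix x :: real
      have "\<bar>x\<bar> \<le> \<bar>x\<bar> powr p + 1"
      proof (cases "\<bar>x\<bar> \<le> 1")
        case True then show ?thesis using powr_ge_zero[of "\<bar>x\<bar>" p] by linarith
      next
        case False
        then have "\<bar>x\<bar> powr 1 \<le> \<bar>x\<bar> powr p" using p by (intro powr_mono) auto
        then show ?thesis by simp
      qed
      then show "norm \<bar>x\<bar> \<le> norm (\<bar>x\<bar> powr p + 1)" by simp
    qed
  qed
qed

lemma nn_integral_pos_part_le_suminf_emeasure:
  fixes Z :: "'a \<Rightarrow> real"
  assumes [measurable]: "Z \<in> borel_measurable M"
  shows "(\<integral>\<^sup>+\<omega>. ennreal (max (Z \<omega>) 0) \<partial>M) \<le> (\<Sum>n. emeasure M {\<omega>\<in>space M. real n < Z \<omega>})"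
proof -
  have "(\<integral>\<^sup>+\<omega>. ennreal (max (Z \<omega>) 0) \<partial>M) \<le> (\<integral>\<^sup>+\<omega>. (\<Sum>n. indicator {real n<..} (Z \<omega>)) \<partial>M)"
  proof (intro nn_integral_mono)
    fix \<omega>
    have "max (Z \<omega>) 0 \<le> real (nat \<lceil>Z \<omega>\<rceil>)" by linarith
    then show "ennreal (max (Z \<omega>) 0) \<le> (\<Sum>n. indicator {real n<..} (Z \<omega>))"
      unfolding suminf_indicator_greaterThan_real by (rule ennreal_leI)
  qed
  also have "\<dots> = (\<Sum>n. \<integral>\<^sup>+\<omega>. indicator {real n<..} (Z \<omega>) \<partial>M)"
    by (intro nn_integral_suminf) measurable
  also have "\<dots> = (\<Sum>n. emeasure M {\<omega>\<in>space M. real n < Z \<omega>})"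
  proof (intro suminf_cong)
    fix n
    have "(\<integral>\<^sup>+\<omega>. indicator {real n<..} (Z \<omega>) \<partial>M) = (\<integral>\<^sup>+\<omega>. indicator {\<omega>\<in>space M. real n < Z \<omega>} \<omega> \<partial>M)"
      by (intro nn_integral_cong) (auto simp: indicator_def)
    then show "(\<integral>\<^sup>+\<omega>. indicator {real n<..} (Z \<omega>) \<partial>M) = emeasure M {\<omega>\<in>space M. real n < Z \<omega>}"
      by simp
  qed
  finally show ?thesis .
qed

lemma suminf_emeasure_greaterThan_le:
  fixes N :: "real measure"
  assumes N: "sets N = sets borel"
  shows "(\<Sum>n. emeasure N {real n<..}) \<le> (\<integral>\<^sup>+x. ennreal (\<bar>x\<bar> + 1) \<partial>N)"
proof -
  have meas_N: "measurable N = measurable borel" by (rule ext measurable_cong_sets)+ (use N in auto)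
  have ind_meas: "(\<lambda>x. indicator {real n<..} x :: ennreal) \<in> borel_measurable N" for n
    unfolding meas_N by measurable
  have "(\<Sum>n. emeasure N {real n<..}) = (\<Sum>n. \<integral>\<^sup>+x. indicator {real n<..} x \<partial>N)"
    using N by (intro suminf_cong) simp
  also have "\<dots> = (\<integral>\<^sup>+x. (\<Sum>n. indicator {real n<..} x) \<partial>N)"
    by (intro nn_integral_suminf[symmetric] ind_meas)
  also have "\<dots> \<le> (\<integral>\<^sup>+x. ennreal (\<bar>x\<bar> + 1) \<partial>N)"
  proof (intro nn_integral_mono)
    fix x :: real
    have "real (nat \<lceil>x\<rceil>) \<le> \<bar>x\<bar> + 1" by linarith
    then show "(\<Sum>n. indicator {real n<..} x) \<le> ennreal (\<bar>x\<bar> + 1)"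
      unfolding suminf_indicator_greaterThan_real by (rule ennreal_leI)
  qed
  finally show ?thesis .
qed

context prob_space
begin

lemma nn_integral_le_weighted_tail_sum:
  fixes Z g :: "'a \<Rightarrow> real" and w b q :: "nat \<Rightarrow> real"
  assumes [measurable]: "Z \<in> borel_measurable M"
    and w: "\<And>n. w n \<ge> 0"
    and g: "\<And>\<omega>. \<omega> \<in> space M \<Longrightarrow>
              ennreal (g \<omega>) \<le> (\<Sum>n. ennreal (w n) * indicator {\<omega>\<in>space M. b n < Z \<omega>} \<omega>)"
    and tail: "\<And>n. prob {\<omega>\<in>space M. b n < Z \<omega>} \<le> q n"
    and summable: "summable (\<lambda>n. w n * q n)"
  shows "(\<integral>\<^sup>+\<omega>. ennreal (g \<omega>) \<partial>M) \<le> ennreal (\<Sum>n. w n * q n)"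
proof -
  have q: "q n \<ge> 0" for n using tail[of n] measure_nonneg order_trans by blast
  have "(\<integral>\<^sup>+\<omega>. ennreal (g \<omega>) \<partial>M)
      \<le> (\<integral>\<^sup>+\<omega>. (\<Sum>n. ennreal (w n) * indicator {\<omega>\<in>space M. b n < Z \<omega>} \<omega>) \<partial>M)"
    by (intro nn_integral_mono g)
  also have "\<dots> = (\<Sum>n. ennreal (w n) * emeasure M {\<omega>\<in>space M. b n < Z \<omega>})"
    by (simp add: nn_integral_suminf nn_integral_cmult_indicator)
  also have "\<dots> \<le> (\<Sum>n. ennreal (w n * q n))"
  proof (intro suminf_le summableI)
    fix n
    have "emeasure M {\<omega>\<in>space M. b n < Z \<omega>} \<le> ennreal (q n)"
      using tail[of n] by (simp add: emeasure_eq_measure ennreal_leI)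
    then show "ennreal (w n) * emeasure M {\<omega>\<in>space M. b n < Z \<omega>} \<le> ennreal (w n * q n)"
      using w[of n] q[of n] by (simp add: ennreal_mult' mult_left_mono)
  qed
  also have "\<dots> = ennreal (\<Sum>n. w n * q n)"
    using w q summable by (intro suminf_ennreal2) auto
  finally show ?thesis .
qed

lemma expectation_le_of_nn_integral_le:
  fixes f :: "'a \<Rightarrow> real"
  assumes "integrable M f" "\<And>\<omega>. f \<omega> \<ge> 0" "(\<integral>\<^sup>+\<omega>. ennreal (f \<omega>) \<partial>M) \<le> ennreal B" "B \<ge> 0"
  shows "expectation f \<le> B"
  using assms by (subst (asm) nn_integral_eq_integral) auto

lemma truncated_abs_moment_le:
  fixes Y :: "'a \<Rightarrow> real"
  assumes Y: "integrable M Y" and \<beta>: "\<beta> > 1"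
    and tail: "\<And>x. x > 0 \<Longrightarrow> prob {\<omega>\<in>space M. x < \<bar>Y \<omega>\<bar>} \<le> A * x powr -\<beta>" and y: "y > 0"
  shows "expectation (\<lambda>\<omega>. if y < \<bar>Y \<omega>\<bar> then \<bar>Y \<omega>\<bar> else 0)
           \<le> 2 * A * y powr (1 - \<beta>) / (1 - 2 powr (1 - \<beta>))"
proof -
  have [measurable]: "Y \<in> borel_measurable M" using Y by auto
  have A: "A \<ge> 0" using tail[of 1] measure_nonneg[of M] by (metis order_trans powr_one_eq_one mult_1_right zero_less_one)
  note S = dyadic_upper_tail_sums[OF y \<beta>, of A]
  have "2 powr (1 - \<beta>) < 1" using \<beta> by (simp add: powr_less_one)
  have "(\<integral>\<^sup>+\<omega>. ennreal (if y < \<bar>Y \<omega>\<bar> then \<bar>Y \<omega>\<bar> else 0) \<partial>M)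
     \<le> ennreal (\<Sum>n. y * 2^Suc n * (A * (y * 2^n) powr -\<beta>))"
  proof (rule nn_integral_le_weighted_tail_sum[where Z="\<lambda>\<omega>. \<bar>Y \<omega>\<bar>" and b="\<lambda>n. y * 2^n"])
    fix \<omega> assume \<omega>: "\<omega> \<in> space M"
    show "ennreal (if y < \<bar>Y \<omega>\<bar> then \<bar>Y \<omega>\<bar> else 0)
      \<le> (\<Sum>n. ennreal (y * 2^Suc n) * indicator {\<omega>\<in>space M. y * 2^n < \<bar>Y \<omega>\<bar>} \<omega>)"
    proof (cases "y < \<bar>Y \<omega>\<bar>")
      case True
      then obtain n where n: "y * 2^n < \<bar>Y \<omega>\<bar>" "\<bar>Y \<omega>\<bar> \<le> y * 2^Suc n"
        using exists_dyadic_bracket_above[OF y] by blast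
      then have "ennreal (if y < \<bar>Y \<omega>\<bar> then \<bar>Y \<omega>\<bar> else 0)
          \<le> ennreal (y * 2^Suc n) * indicator {\<omega>\<in>space M. y * 2^n < \<bar>Y \<omega>\<bar>} \<omega>"
        using \<omega> by (auto intro: ennreal_leI)
      also have "\<dots> \<le> (\<Sum>n. ennreal (y * 2^Suc n) * indicator {\<omega>\<in>space M. y * 2^n < \<bar>Y \<omega>\<bar>} \<omega>)"
        by (rule sum_le_suminf[of _ "{n}", simplified]) (auto intro: summableI)
      finally show ?thesis .
    qed simp
  qed (use y S tail in \<open>auto intro: sums_summable\<close>)
  then show ?thesis
    using sums_unique[OF S, symmetric] A y \<open>2 powr (1 - \<beta>) < 1\<close>
    by (intro expectation_le_of_nn_integral_le)
       (auto intro!: Bochner_Integration.integrable_bound[OF integrable_abs[OF Y]] simp: powr_less_one)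
qed

lemma truncated_second_moment_le:
  fixes Y :: "'a \<Rightarrow> real"
  assumes [measurable]: "Y \<in> borel_measurable M" and \<beta>: "\<beta> < 2"
    and tail: "\<And>x. x > 0 \<Longrightarrow> prob {\<omega>\<in>space M. x < \<bar>Y \<omega>\<bar>} \<le> A * x powr -\<beta>" and y: "y > 0"
  shows "expectation (\<lambda>\<omega>. if \<bar>Y \<omega>\<bar> \<le> y then (Y \<omega>)^2 else 0)
           \<le> A * 2 powr \<beta> * y powr (2 - \<beta>) / (1 - 2 powr (\<beta> - 2))"
proof -
  have A: "A \<ge> 0" using tail[of 1] measure_nonneg[of M] by (metis order_trans powr_one_eq_one mult_1_right zero_less_one)
  note S = dyadic_lower_tail_sums[OF y \<beta>, of A]
  have "2 powr (\<beta> - 2) < 1" using \<beta> by (simp add: powr_less_one)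
  have "(\<integral>\<^sup>+\<omega>. ennreal (if \<bar>Y \<omega>\<bar> \<le> y then (Y \<omega>)^2 else 0) \<partial>M)
     \<le> ennreal (\<Sum>n. (y / 2^n)^2 * (A * (y / 2^Suc n) powr -\<beta>))"
  proof (rule nn_integral_le_weighted_tail_sum[where Z="\<lambda>\<omega>. \<bar>Y \<omega>\<bar>" and b="\<lambda>n. y / 2^Suc n"])
    fix \<omega> assume \<omega>: "\<omega> \<in> space M"
    show "ennreal (if \<bar>Y \<omega>\<bar> \<le> y then (Y \<omega>)^2 else 0)
      \<le> (\<Sum>n. ennreal ((y / 2^n)^2) * indicator {\<omega>\<in>space M. y / 2^Suc n < \<bar>Y \<omega>\<bar>} \<omega>)"
    proof (cases "\<bar>Y \<omega>\<bar> \<le> y \<and> 0 < \<bar>Y \<omega>\<bar>")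
      case True
      then obtain n where n: "y / 2^Suc n < \<bar>Y \<omega>\<bar>" "\<bar>Y \<omega>\<bar> \<le> y / 2^n"
        using exists_dyadic_bracket_below[OF y] by blast
      have "(Y \<omega>)^2 \<le> (y / 2^n)^2"
        using n(2) by (metis abs_ge_zero power2_abs power_mono)
      then have "ennreal (if \<bar>Y \<omega>\<bar> \<le> y then (Y \<omega>)^2 else 0)
          \<le> ennreal ((y / 2^n)^2) * indicator {\<omega>\<in>space M. y / 2^Suc n < \<bar>Y \<omega>\<bar>} \<omega>"
        using True n \<omega> by (auto intro: ennreal_leI)
      also have "\<dots> \<le> (\<Sum>n. ennreal ((y / 2^n)^2) * indicator {\<omega>\<in>space M. y / 2^Suc n < \<bar>Y \<omega>\<bar>} \<omega>)"
        by (rule sum_le_suminf[of _ "{n}", simplified]) (auto intro: summableI)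
      finally show ?thesis .
    qed auto
  qed (use y S tail in \<open>auto intro: sums_summable\<close>)
  moreover have "\<bar>Y \<omega>\<bar> \<le> y \<Longrightarrow> (Y \<omega>)^2 \<le> y^2" for \<omega>
    by (metis abs_ge_zero power2_abs power_mono)
  ultimately show ?thesis
    using sums_unique[OF S, symmetric] A y \<open>2 powr (\<beta> - 2) < 1\<close>
    by (intro expectation_le_of_nn_integral_le)
       (auto intro!: integrable_const_bound[where B="y^2"] simp: powr_less_one)
qed

lemma variance_sum_indep_bounded:
  fixes Y :: "'i \<Rightarrow> 'a \<Rightarrow> real"
  assumes K: "finite K" and ind: "indep_vars (\<lambda>_. borel) Y K"
    and bounded: "\<And>k \<omega>. k \<in> K \<Longrightarrow> \<bar>Y k \<omega>\<bar> \<le> B"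
  shows "variance (\<lambda>\<omega>. \<Sum>k\<in>K. Y k \<omega>) = (\<Sum>k\<in>K. variance (Y k))"
proof -
  define W where "W k = (\<lambda>\<omega>. Y k \<omega> - expectation (Y k))" for k
  have meas: "Y k \<in> borel_measurable M" if "k \<in> K" for k
    using ind that unfolding indep_vars_def by auto
  have int: "integrable M (Y k)" if "k \<in> K" for k
    using meas[OF that] bounded[OF that] by (intro integrable_const_bound[where B=B]) auto
  have W_bound: "\<bar>W k \<omega>\<bar> \<le> 2 * B" if "k \<in> K" for k \<omega>
  proof -
    have "\<bar>expectation (Y k)\<bar> \<le> expectation (\<lambda>\<omega>. \<bar>Y k \<omega>\<bar>)" by (rule integral_abs_bound)
    also have "\<dots> \<le> expectation (\<lambda>_. B)" using bounded[OF that] int[OF that] by (intro integral_mono) auto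
    finally have "\<bar>expectation (Y k)\<bar> \<le> B" by (simp add: prob_space)
    then show ?thesis using bounded[OF that, of \<omega>] by (simp add: W_def)
  qed
  have int_WW: "integrable M (\<lambda>\<omega>. W i \<omega> * W j \<omega>)" if "i \<in> K" "j \<in> K" for i j
  proof -
    have "0 \<le> B" using abs_ge_zero[of "Y i undefined"] bounded[OF that(1), of undefined] by linarith
    then have "\<bar>W i \<omega> * W j \<omega>\<bar> \<le> (2 * B) * (2 * B)" for \<omega>
      unfolding abs_mult using W_bound[OF that(1)] W_bound[OF that(2)] by (intro mult_mono) auto
    then show ?thesis
      using meas that by (intro integrable_const_bound[where B="(2 * B) * (2 * B)"]) (auto simp: W_def)
  qed
  have cross: "expectation (\<lambda>\<omega>. W i \<omega> * W j \<omega>) = 0" if "i \<in> K" "j \<in> K" "i \<noteq> j" for i j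
  proof -
    have "indep_vars (\<lambda>_. borel) W K"
      unfolding W_def by (rule indep_vars_compose2[OF ind, of "\<lambda>k y. y - expectation (Y k)"]) simp
    then have "indep_vars (\<lambda>_. borel) W {i, j}" by (rule indep_vars_subset) (use that in auto)
    moreover have "integrable M (W l)" if "l \<in> {i, j}" for l
      using that \<open>i \<in> K\<close> \<open>j \<in> K\<close> int by (auto simp: W_def)
    ultimately have "expectation (\<lambda>\<omega>. \<Prod>l\<in>{i, j}. W l \<omega>) = (\<Prod>l\<in>{i, j}. expectation (W l))"
      by (intro indep_vars_lebesgue_integral) auto
    then show ?thesis using that int by (simp add: W_def prob_space)
  qed
  have "(\<Sum>k\<in>K. Y k \<omega>) - expectation (\<lambda>\<omega>. \<Sum>k\<in>K. Y k \<omega>) = (\<Sum>k\<in>K. W k \<omega>)" for \<omega>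
    using int by (simp add: W_def sum_subtractf)
  then have "variance (\<lambda>\<omega>. \<Sum>k\<in>K. Y k \<omega>) = expectation (\<lambda>\<omega>. (\<Sum>k\<in>K. W k \<omega>)^2)"
    by (simp only:)
  also have "\<dots> = (\<Sum>i\<in>K. \<Sum>j\<in>K. expectation (\<lambda>\<omega>. W i \<omega> * W j \<omega>))"
    using int_WW by (simp add: power2_eq_square sum_product)
  also have "\<dots> = (\<Sum>k\<in>K. expectation (\<lambda>\<omega>. W k \<omega> * W k \<omega>))"
  proof (intro sum.cong refl)
    fix i assume i: "i \<in> K"
    have "(\<Sum>j\<in>K - {i}. expectation (\<lambda>\<omega>. W i \<omega> * W j \<omega>)) = 0"
      using i cross by (intro sum.neutral) auto
    then show "(\<Sum>j\<in>K. expectation (\<lambda>\<omega>. W i \<omega> * W j \<omega>)) = expectation (\<lambda>\<omega>. W i \<omega> * W i \<omega>)"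
      using i K by (simp add: sum.remove)
  qed
  finally show ?thesis by (simp add: W_def power2_eq_square)
qed

lemma prob_sum_indep_bounded_deviation:
  fixes Y :: "'i \<Rightarrow> 'a \<Rightarrow> real"
  assumes K: "finite K" and ind: "indep_vars (\<lambda>_. borel) Y K"
    and bounded: "\<And>k \<omega>. k \<in> K \<Longrightarrow> \<bar>Y k \<omega>\<bar> \<le> B" and e: "e > 0"
  shows "prob {\<omega>\<in>space M. e \<le> \<bar>(\<Sum>k\<in>K. Y k \<omega>) - expectation (\<lambda>\<omega>. \<Sum>k\<in>K. Y k \<omega>)\<bar>}
           \<le> (\<Sum>k\<in>K. variance (Y k)) / e^2"
proof -
  let ?S = "\<lambda>\<omega>. \<Sum>k\<in>K. Y k \<omega>"
  have meas: "Y k \<in> borel_measurable M" if "k \<in> K" for k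
    using ind that unfolding indep_vars_def by blast
  then have [measurable]: "?S \<in> borel_measurable M" by (rule borel_measurable_sum)
  have "\<bar>?S \<omega>\<bar> \<le> real (card K) * B" for \<omega>
  proof -
    have "\<bar>?S \<omega>\<bar> \<le> (\<Sum>k\<in>K. \<bar>Y k \<omega>\<bar>)" by (rule sum_abs)
    also have "\<dots> \<le> (\<Sum>k\<in>K. B)" by (intro sum_mono bounded)
    finally show ?thesis by simp
  qed
  then have "(?S \<omega>)^2 \<le> (real (card K) * B)^2" for \<omega> by (metis abs_ge_zero power2_abs power_mono)
  then have "integrable M (\<lambda>\<omega>. (?S \<omega>)^2)"
    by (intro integrable_const_bound[where B="(real (card K) * B)^2"]) auto
  then have "prob {\<omega>\<in>space M. e \<le> \<bar>?S \<omega> - expectation ?S\<bar>} \<le> variance ?S / e^2"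
    using e by (intro Chebyshev_inequality) auto
  also have "variance ?S = (\<Sum>k\<in>K. variance (Y k))"
    using K ind bounded by (rule variance_sum_indep_bounded)
  finally show ?thesis .
qed

lemma abs_expectation_diff_truncation_le:
  fixes Y :: "'a \<Rightarrow> real"
  assumes Y: "integrable M Y" and \<beta>: "\<beta> > 1"
    and tail: "\<And>x. x > 0 \<Longrightarrow> prob {\<omega>\<in>space M. x < \<bar>Y \<omega>\<bar>} \<le> A * x powr -\<beta>" and y: "y > 0"
  shows "\<bar>expectation Y - expectation (\<lambda>\<omega>. if \<bar>Y \<omega>\<bar> \<le> y then Y \<omega> else 0)\<bar>
           \<le> 2 * A * y powr (1 - \<beta>) / (1 - 2 powr (1 - \<beta>))"
proof -
  have [measurable]: "Y \<in> borel_measurable M" using Y by auto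
  have "expectation Y - expectation (\<lambda>\<omega>. if \<bar>Y \<omega>\<bar> \<le> y then Y \<omega> else 0)
      = expectation (\<lambda>\<omega>. if y < \<bar>Y \<omega>\<bar> then Y \<omega> else 0)"
    using Y by (subst Bochner_Integration.integral_diff[symmetric])
      (auto intro!: Bochner_Integration.integral_cong Bochner_Integration.integrable_bound[OF integrable_abs[OF Y]])
  also have "\<bar>\<dots>\<bar> \<le> expectation (\<lambda>\<omega>. \<bar>if y < \<bar>Y \<omega>\<bar> then Y \<omega> else 0\<bar>)"
    by (rule integral_abs_bound)
  also have "\<dots> = expectation (\<lambda>\<omega>. if y < \<bar>Y \<omega>\<bar> then \<bar>Y \<omega>\<bar> else 0)"
    by (rule Bochner_Integration.integral_cong) auto
  also have "\<dots> \<le> 2 * A * y powr (1 - \<beta>) / (1 - 2 powr (1 - \<beta>))"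
    by (rule truncated_abs_moment_le[OF Y \<beta> tail y])
  finally show ?thesis .
qed

lemma variance_truncation_le:
  fixes Y :: "'a \<Rightarrow> real"
  assumes [measurable]: "Y \<in> borel_measurable M" and \<beta>: "\<beta> < 2"
    and tail: "\<And>x. x > 0 \<Longrightarrow> prob {\<omega>\<in>space M. x < \<bar>Y \<omega>\<bar>} \<le> A * x powr -\<beta>" and y: "y > 0"
  shows "variance (\<lambda>\<omega>. if \<bar>Y \<omega>\<bar> \<le> y then Y \<omega> else 0)
           \<le> A * 2 powr \<beta> * y powr (2 - \<beta>) / (1 - 2 powr (\<beta> - 2))"
proof -
  let ?V = "\<lambda>\<omega>. if \<bar>Y \<omega>\<bar> \<le> y then Y \<omega> else 0"
  have bound: "\<bar>?V \<omega>\<bar> \<le> y" for \<omega> using y by auto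
  then have "(?V \<omega>)^2 \<le> y^2" for \<omega> by (metis abs_ge_zero power2_abs power_mono)
  then have "integrable M (\<lambda>\<omega>. (?V \<omega>)^2)" by (intro integrable_const_bound[where B="y^2"]) auto
  moreover have "integrable M ?V" using bound by (intro integrable_const_bound[where B=y]) auto
  ultimately have "variance ?V \<le> expectation (\<lambda>\<omega>. (?V \<omega>)^2)" by (simp add: variance_eq)
  also have "\<dots> = expectation (\<lambda>\<omega>. if \<bar>Y \<omega>\<bar> \<le> y then (Y \<omega>)^2 else 0)"
    by (rule Bochner_Integration.integral_cong) auto
  also have "\<dots> \<le> A * 2 powr \<beta> * y powr (2 - \<beta>) / (1 - 2 powr (\<beta> - 2))"
    by (rule truncated_second_moment_le[OF _ \<beta> tail y]) simp
  finally show ?thesis .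
qed

lemma prob_abs_sum_centered_ge_le:
  fixes Z :: "nat \<Rightarrow> 'a \<Rightarrow> real" and a :: "nat \<Rightarrow> real"
  assumes fin: "finite K" and ind: "indep_vars (\<lambda>_. borel) Z K"
    and int: "\<And>k. k \<in> K \<Longrightarrow> integrable M (Z k)"
    and \<beta>: "1 < \<beta>" "\<beta> < 2" and T: "T > 0" and \<epsilon>: "\<epsilon> > 0"
    and tail: "\<And>k x. k \<in> K \<Longrightarrow> x > 0 \<Longrightarrow> prob {\<omega>\<in>space M. x < \<bar>Z k \<omega>\<bar>} \<le> a k * x powr -\<beta>"
  shows "prob {\<omega>\<in>space M. \<epsilon> * T + 2 / (1 - 2 powr (1 - \<beta>)) * T * (sum a K * T powr -\<beta>)
                            \<le> \<bar>\<Sum>k\<in>K. Z k \<omega> - expectation (Z k)\<bar>}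
           \<le> (1 + 2 powr \<beta> / (1 - 2 powr (\<beta> - 2)) / \<epsilon>^2) * (sum a K * T powr -\<beta>)"
    (is "prob ?E \<le> (1 + ?c2 / \<epsilon>^2) * ?s")
proof -
  let ?c1 = "2 / (1 - 2 powr (1 - \<beta>))"
  define V where "V k \<omega> = (if \<bar>Z k \<omega>\<bar> \<le> T then Z k \<omega> else 0)" for k \<omega>
  define S where "S \<omega> = (\<Sum>k\<in>K. V k \<omega>)" for \<omega>
  have Z: "Z k \<in> borel_measurable M" if "k \<in> K" for k using int[OF that] by auto
  have V_bound: "\<bar>V k \<omega>\<bar> \<le> T" for k \<omega> using T by (auto simp: V_def)
  have ind_V: "indep_vars (\<lambda>_. borel) V K"
    unfolding V_def by (rule indep_vars_compose2[OF ind, of "\<lambda>_ y. if \<bar>y\<bar> \<le> T then y else 0"]) simp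
  have V_meas: "V k \<in> borel_measurable M" if "k \<in> K" for k
    using ind_V that unfolding indep_vars_def by blast
  have int_V: "integrable M (V k)" if "k \<in> K" for k
    using V_meas[OF that] V_bound by (intro integrable_const_bound[where B=T]) auto
  have [measurable]: "S \<in> borel_measurable M"
    unfolding S_def using V_meas by (rule borel_measurable_sum)
  have "(\<Sum>k\<in>K. variance (V k)) \<le> (\<Sum>k\<in>K. ?c2 * T^2 * (a k * T powr -\<beta>))"
  proof (intro sum_mono)
    fix k assume k: "k \<in> K"
    have "variance (V k) \<le> a k * 2 powr \<beta> * T powr (2 - \<beta>) / (1 - 2 powr (\<beta> - 2))"
      unfolding V_def[abs_def] using Z[OF k] \<beta>(2) tail[OF k] T by (rule variance_truncation_le)
    also have "\<dots> = ?c2 * T^2 * (a k * T powr -\<beta>)"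
      using T powr_add[of T 2 "-\<beta>"] by (simp add: powr_numeral)
    finally show "variance (V k) \<le> ?c2 * T^2 * (a k * T powr -\<beta>)" .
  qed
  also have "\<dots> = ?c2 * T^2 * ?s" by (simp add: sum_distrib_left sum_distrib_right)
  finally have "(\<Sum>k\<in>K. variance (V k)) / (\<epsilon> * T)^2 \<le> ?c2 * T^2 * ?s / (\<epsilon> * T)^2"
    by (rule divide_right_mono) simp
  also have "\<dots> = (T^2 * (?c2 * ?s)) / (T^2 * \<epsilon>^2)" by (simp add: power_mult_distrib mult_ac)
  also have "\<dots> = ?c2 * ?s / \<epsilon>^2" using T by (intro mult_divide_mult_cancel_left) simp
  finally have chebyshev: "prob {\<omega>\<in>space M. \<epsilon> * T \<le> \<bar>S \<omega> - expectation S\<bar>} \<le> ?c2 * ?s / \<epsilon>^2"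
    using prob_sum_indep_bounded_deviation[OF fin ind_V V_bound, of "\<epsilon> * T"] \<epsilon> T
    unfolding S_def by simp
  have "\<bar>expectation (Z k) - expectation (V k)\<bar> \<le> ?c1 * T * (a k * T powr -\<beta>)" if k: "k \<in> K" for k
  proof -
    have "\<bar>expectation (Z k) - expectation (V k)\<bar> \<le> 2 * a k * T powr (1 - \<beta>) / (1 - 2 powr (1 - \<beta>))"
      unfolding V_def[abs_def] using int[OF k] \<beta>(1) tail[OF k] T by (rule abs_expectation_diff_truncation_le)
    also have "\<dots> = ?c1 * T * (a k * T powr -\<beta>)"
      using T powr_add[of T 1 "-\<beta>"] by simp
    finally show ?thesis .
  qed
  then have "(\<Sum>k\<in>K. \<bar>expectation (Z k) - expectation (V k)\<bar>) \<le> (\<Sum>k\<in>K. ?c1 * T * (a k * T powr -\<beta>))"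
    by (rule sum_mono)
  also have "(\<Sum>k\<in>K. ?c1 * T * (a k * T powr -\<beta>)) = ?c1 * T * ?s"
    by (simp add: sum_distrib_left sum_distrib_right)
  finally have bias: "\<bar>\<Sum>k\<in>K. expectation (Z k) - expectation (V k)\<bar> \<le> ?c1 * T * ?s"
    by (rule order_trans[OF sum_abs])
  have union: "prob (\<Union>k\<in>K. {\<omega>\<in>space M. T < \<bar>Z k \<omega>\<bar>}) \<le> ?s"
  proof -
    have "prob (\<Union>k\<in>K. {\<omega>\<in>space M. T < \<bar>Z k \<omega>\<bar>}) \<le> (\<Sum>k\<in>K. prob {\<omega>\<in>space M. T < \<bar>Z k \<omega>\<bar>})"
      using fin Z by (intro finite_measure_subadditive_finite) auto
    also have "\<dots> \<le> (\<Sum>k\<in>K. a k * T powr -\<beta>)" using T by (intro sum_mono tail)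
    finally show ?thesis by (simp add: sum_distrib_right)
  qed
  have "?E \<subseteq> {\<omega>\<in>space M. \<epsilon> * T \<le> \<bar>S \<omega> - expectation S\<bar>} \<union> (\<Union>k\<in>K. {\<omega>\<in>space M. T < \<bar>Z k \<omega>\<bar>})"
  proof
    fix \<omega> assume \<omega>: "\<omega> \<in> ?E"
    show "\<omega> \<in> {\<omega>\<in>space M. \<epsilon> * T \<le> \<bar>S \<omega> - expectation S\<bar>} \<union> (\<Union>k\<in>K. {\<omega>\<in>space M. T < \<bar>Z k \<omega>\<bar>})"
    proof (cases "\<exists>k\<in>K. T < \<bar>Z k \<omega>\<bar>")
      case False
      have "expectation S = (\<Sum>k\<in>K. expectation (V k))"
        unfolding S_def using int_V by (rule Bochner_Integration.integral_sum)
      with False have "(\<Sum>k\<in>K. Z k \<omega> - expectation (Z k))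
          = (S \<omega> - expectation S) - (\<Sum>k\<in>K. expectation (Z k) - expectation (V k))"
        by (auto simp: S_def V_def sum_subtractf intro!: sum.cong)
      then show ?thesis using \<omega> bias by auto
    qed (use \<omega> in auto)
  qed
  then have "prob ?E \<le> prob ({\<omega>\<in>space M. \<epsilon> * T \<le> \<bar>S \<omega> - expectation S\<bar>} \<union> (\<Union>k\<in>K. {\<omega>\<in>space M. T < \<bar>Z k \<omega>\<bar>}))"
    using fin Z by (intro finite_measure_mono) auto
  also have "\<dots> \<le> ?c2 * ?s / \<epsilon>^2 + ?s"
    using fin Z chebyshev union by (intro order_trans[OF measure_Un_le] add_mono) auto
  finally show ?thesis by (simp add: field_simps)
qed

text \<open>\<open>E[Z\<^sup>+] = \<Sum>\<^sub>n P(Z > n)\<close> up to one unit, and the same holds for \<open>N\<close>; a centred \<open>Z\<close>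
  has \<open>E|Z| = 2 E[Z\<^sup>+]\<close>.\<close>

lemma expectation_abs_le_of_dominated_upper_tail:
  fixes N :: "real measure" and Z :: "'a \<Rightarrow> real"
  assumes N: "prob_space N" "sets N = sets borel" and int_N: "integrable N (\<lambda>x. \<bar>x\<bar>)"
    and Z: "integrable M Z" "expectation Z = 0"
    and tail: "\<And>x. prob {\<omega>\<in>space M. x < Z \<omega>} \<le> measure N {x<..}"
  shows "expectation (\<lambda>\<omega>. \<bar>Z \<omega>\<bar>) \<le> 2 * (integral\<^sup>L N (\<lambda>x. \<bar>x\<bar>) + 1)"
proof -
  interpret N: prob_space N by (rule N(1))
  have [measurable]: "Z \<in> borel_measurable M" using Z(1) by auto
  have "(\<integral>\<^sup>+\<omega>. ennreal (max (Z \<omega>) 0) \<partial>M) \<le> (\<Sum>n. emeasure M {\<omega>\<in>space M. real n < Z \<omega>})"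
    by (intro nn_integral_pos_part_le_suminf_emeasure) measurable
  also have "\<dots> \<le> (\<Sum>n. emeasure N {real n<..})"
    using tail N(2) by (intro suminf_le summableI)
      (simp add: emeasure_eq_measure N.emeasure_eq_measure ennreal_leI)
  also have "\<dots> \<le> (\<integral>\<^sup>+x. ennreal (\<bar>x\<bar> + 1) \<partial>N)"
    using N(2) by (rule suminf_emeasure_greaterThan_le)
  also have "\<dots> = ennreal (integral\<^sup>L N (\<lambda>x. \<bar>x\<bar>) + 1)"
    using int_N by (subst nn_integral_eq_integral) (auto simp: N.prob_space)
  finally have nn: "(\<integral>\<^sup>+\<omega>. ennreal (max (Z \<omega>) 0) \<partial>M) \<le> ennreal (integral\<^sup>L N (\<lambda>x. \<bar>x\<bar>) + 1)" .
  have int_pos: "integrable M (\<lambda>\<omega>. max (Z \<omega>) 0)"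
    by (rule Bochner_Integration.integrable_bound[OF integrable_abs[OF Z(1)]]) auto
  have int_neg: "integrable M (\<lambda>\<omega>. max (- Z \<omega>) 0)"
    by (rule Bochner_Integration.integrable_bound[OF integrable_abs[OF Z(1)]]) auto
  have "0 \<le> integral\<^sup>L N (\<lambda>x. \<bar>x\<bar>)" by (rule integral_nonneg_AE) auto
  then have pos: "expectation (\<lambda>\<omega>. max (Z \<omega>) 0) \<le> integral\<^sup>L N (\<lambda>x. \<bar>x\<bar>) + 1"
    using nn int_pos by (intro expectation_le_of_nn_integral_le) auto
  have split: "Z = (\<lambda>\<omega>. max (Z \<omega>) 0 - max (- Z \<omega>) 0)" "(\<lambda>\<omega>. \<bar>Z \<omega>\<bar>) = (\<lambda>\<omega>. max (Z \<omega>) 0 + max (- Z \<omega>) 0)"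
    by (auto simp: max_def fun_eq_iff)
  have "expectation (\<lambda>\<omega>. max (Z \<omega>) 0) - expectation (\<lambda>\<omega>. max (- Z \<omega>) 0) = 0"
    using Z(2) int_pos int_neg by (subst (asm) split(1)) simp
  moreover have "expectation (\<lambda>\<omega>. \<bar>Z \<omega>\<bar>)
      = expectation (\<lambda>\<omega>. max (Z \<omega>) 0) + expectation (\<lambda>\<omega>. max (- Z \<omega>) 0)"
    unfolding split(2) using int_pos int_neg by simp
  ultimately have "expectation (\<lambda>\<omega>. \<bar>Z \<omega>\<bar>) = 2 * expectation (\<lambda>\<omega>. max (Z \<omega>) 0)" by simp
  then show ?thesis using pos by simp
qed

lemma prob_le_SUP_prob: "i \<in> I \<Longrightarrow> prob (A i) \<le> (SUP i\<in>I. prob (A i))"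
  by (intro cSUP_upper bdd_aboveI[of _ 1]) auto

lemma AE_eventually_at_top_of_block_events:
  fixes \<tau> b :: "nat \<Rightarrow> real" and P :: "real \<Rightarrow> 'a \<Rightarrow> bool"
  assumes \<tau>: "mono \<tau>" "\<And>n. real n \<le> \<tau> n" and b: "summable b"
    and blocks: "eventually (\<lambda>j. \<exists>B\<in>sets M. prob B \<le> b j \<and>
        (\<forall>\<omega>\<in>space M - B. \<forall>t. \<tau> j \<le> t \<longrightarrow> t < \<tau> (Suc j) \<longrightarrow> P t \<omega>)) sequentially"
  shows "AE \<omega> in M. eventually (\<lambda>t. P t \<omega>) at_top"
proof -
  obtain J where J: "\<forall>j\<ge>J. \<exists>B\<in>sets M. prob B \<le> b j \<and>
      (\<forall>\<omega>\<in>space M - B. \<forall>t. \<tau> j \<le> t \<longrightarrow> t < \<tau> (Suc j) \<longrightarrow> P t \<omega>)"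
    using blocks by (auto simp: eventually_sequentially)
  have "\<forall>j. \<exists>B. B \<in> sets M \<and> (J \<le> j \<longrightarrow> prob B \<le> b j \<and>
      (\<forall>\<omega>\<in>space M - B. \<forall>t. \<tau> j \<le> t \<longrightarrow> t < \<tau> (Suc j) \<longrightarrow> P t \<omega>))"
  proof
    fix j show "\<exists>B. B \<in> sets M \<and> (J \<le> j \<longrightarrow> prob B \<le> b j \<and>
        (\<forall>\<omega>\<in>space M - B. \<forall>t. \<tau> j \<le> t \<longrightarrow> t < \<tau> (Suc j) \<longrightarrow> P t \<omega>))"
    proof (cases "J \<le> j")
      case True then show ?thesis using J by blast
    next
      case False then show ?thesis by (intro exI[of _ "{}"]) simp
    qed
  qed
  then obtain B where "\<forall>j. B j \<in> sets M \<and> (J \<le> j \<longrightarrow> prob (B j) \<le> b j \<and>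
      (\<forall>\<omega>\<in>space M - B j. \<forall>t. \<tau> j \<le> t \<longrightarrow> t < \<tau> (Suc j) \<longrightarrow> P t \<omega>))"
    by (metis choice)
  then have B: "\<And>j. B j \<in> sets M"
    and prob_B: "\<And>j. J \<le> j \<Longrightarrow> prob (B j) \<le> b j"
    and P: "\<And>j \<omega> t. J \<le> j \<Longrightarrow> \<omega> \<in> space M - B j \<Longrightarrow> \<tau> j \<le> t \<Longrightarrow> t < \<tau> (Suc j) \<Longrightarrow> P t \<omega>"
    by blast+
  have "summable (\<lambda>j. prob (B j))"
  proof (rule summable_comparison_test'[OF b])
    fix j assume "J \<le> j"
    then show "norm (prob (B j)) \<le> b j" using prob_B by simp
  qed
  then have "AE \<omega> in M. eventually (\<lambda>j. \<omega> \<in> space M - B j) sequentially"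
    using B by (intro borel_cantelli_AE1) (auto simp: emeasure_eq_measure)
  then show ?thesis
  proof (rule AE_mp, intro AE_I2 impI)
    fix \<omega> assume "eventually (\<lambda>j. \<omega> \<in> space M - B j) sequentially"
    then obtain J' where J': "\<And>j. j \<ge> J' \<Longrightarrow> \<omega> \<in> space M - B j" by (auto simp: eventually_sequentially)
    show "eventually (\<lambda>t. P t \<omega>) at_top"
      unfolding eventually_at_top_linorder
    proof (intro exI allI impI)
      fix t assume "t \<ge> \<tau> (max J J')"
      then obtain j where "j \<ge> max J J'" "\<tau> j \<le> t" "t < \<tau> (Suc j)"
        using exists_block_containing[OF \<tau>] by blast
      then show "P t \<omega>" using P[of j \<omega> t] J'[of j] by auto
    qed
  qed
qed

lemma AE_tendsto_0_of_AE_eventually_abs_le: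
  fixes f :: "'b \<Rightarrow> 'a \<Rightarrow> real"
  assumes "\<And>\<epsilon>. \<epsilon> > 0 \<Longrightarrow> AE \<omega> in M. eventually (\<lambda>t. \<bar>f t \<omega>\<bar> \<le> \<epsilon>) F"
  shows "AE \<omega> in M. ((\<lambda>t. f t \<omega>) \<longlongrightarrow> 0) F"
proof -
  have "AE \<omega> in M. \<forall>n::nat. eventually (\<lambda>t. \<bar>f t \<omega>\<bar> \<le> 1 / (real n + 1)) F"
    using assms by (simp add: AE_all_countable)
  then show ?thesis
  proof (rule AE_mp, intro AE_I2 impI tendstoI)
    fix \<omega> and e :: real
    assume H: "\<forall>n::nat. eventually (\<lambda>t. \<bar>f t \<omega>\<bar> \<le> 1 / (real n + 1)) F" and e: "e > 0"
    obtain n :: nat where "1 / e < real n" using reals_Archimedean2 by blast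
    then have "1 / e < real n + 1" by linarith
    then have "1 / (real n + 1) < e" using e by (simp add: field_simps)
    then show "eventually (\<lambda>t. dist (f t \<omega>) 0 < e) F"
      using H[rule_format, of n] by (auto elim!: eventually_mono)
  qed
qed

end

section \<open>Blocks\<close>

locale block_lengths =
  fixes ms :: "nat \<Rightarrow> real"
  assumes ms_pos: "\<And>k. k \<ge> 1 \<Longrightarrow> ms k > 0"
    and Mpart_at_top: "filterlim (Mpart ms) at_top sequentially"
begin

lemma Mpart_0 [simp]: "Mpart ms 0 = 0"
  unfolding Mpart_def by simp

lemma Mpart_Suc: "Mpart ms (Suc n) = Mpart ms n + ms (Suc n)"
  unfolding Mpart_def by (simp add: sum.cl_ivl_Suc)

lemma Mpart_strict_mono: "strict_mono (Mpart ms)"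
  using ms_pos by (intro strict_monoI_Suc) (simp add: Mpart_Suc)

lemma Mpart_le_iff [simp]: "Mpart ms a \<le> Mpart ms b \<longleftrightarrow> a \<le> b"
  using Mpart_strict_mono by (simp add: strict_mono_less_eq)

lemma sum_ms_eq_Mpart_diff: "a \<le> b \<Longrightarrow> (\<Sum>k=Suc a..b. ms k) = Mpart ms b - Mpart ms a"
proof (induction b)
  case (Suc b)
  then show ?case by (cases "a = Suc b") (auto simp: sum.cl_ivl_Suc Mpart_Suc)
qed simp

lemma exists_Mpart_ge: "\<exists>l. t \<le> Mpart ms l"
  using Mpart_at_top by (auto simp: filterlim_at_top eventually_sequentially)

lemma le_Mpart_ell: "t \<le> Mpart ms (ell ms t)"
  unfolding ell_def by (rule LeastI_ex[OF exists_Mpart_ge])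

lemma less_ell_iff: "k < ell ms t \<longleftrightarrow> Mpart ms k < t"
proof
  assume "k < ell ms t"
  then show "Mpart ms k < t" unfolding ell_def using not_less_Least by force
next
  assume "Mpart ms k < t"
  then show "k < ell ms t" using le_Mpart_ell[of t] by (meson Mpart_le_iff order_trans not_le)
qed

lemma ell_ge_1: "t > 0 \<Longrightarrow> ell ms t \<ge> 1"
  using less_ell_iff[of 0 t] by simp

lemma Mpart_ell_minus_1_less: "t > 0 \<Longrightarrow> Mpart ms (ell ms t - 1) < t"
  using less_ell_iff[of "ell ms t - 1" t] ell_ge_1[of t] by auto

lemma ell_mono: "t \<le> t' \<Longrightarrow> ell ms t \<le> ell ms t'"
  using less_ell_iff le_Mpart_ell by (meson leI less_le_trans not_le)

lemma Mpart_ell: "t > 0 \<Longrightarrow> Mpart ms (ell ms t) = Mpart ms (ell ms t - 1) + ms (ell ms t)"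
  using Mpart_Suc[of "ell ms t - 1"] ell_ge_1[of t] by simp

lemma tbar_pos: "t > 0 \<Longrightarrow> tbar ms t > 0"
  unfolding tbar_def using Mpart_ell_minus_1_less[of t] by simp

lemma tbar_le_ms: "t > 0 \<Longrightarrow> tbar ms t \<le> ms (ell ms t)"
  unfolding tbar_def using Mpart_ell[of t] le_Mpart_ell[of t] by simp

lemma sum_ms_middle_blocks_le:
  assumes "0 < T" "T \<le> T'"
  shows "(\<Sum>k=Suc (ell ms T)..<ell ms T'. ms k) \<le> T' - T"
proof (cases "Suc (ell ms T) < ell ms T'")
  case True
  then have "(\<Sum>k=Suc (ell ms T)..<ell ms T'. ms k) = Mpart ms (ell ms T' - 1) - Mpart ms (ell ms T)"
    using sum_ms_eq_Mpart_diff[of "ell ms T" "ell ms T' - 1"] by (simp add: atLeastLessThanSuc_atLeastAtMost[symmetric])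
  moreover have "Mpart ms (ell ms T' - 1) < T'" using assms by (intro Mpart_ell_minus_1_less) auto
  ultimately show ?thesis using le_Mpart_ell[of T] by linarith
qed (use assms in auto)

definition block_sum :: "(nat \<Rightarrow> real \<Rightarrow> real) \<Rightarrow> real \<Rightarrow> real" where
  "block_sum G t = (\<Sum>k=1..<ell ms t. G k (ms k)) + G (ell ms t) (tbar ms t)"

lemma St_eq_block_sum:
  assumes "t > 0"
  shows "t * St X ms t \<omega> = block_sum (\<lambda>k u. u * X k u \<omega>) t"
proof -
  have "{1..ell ms t - 1} = {1..<ell ms t}" using ell_ge_1[OF assms] by auto
  then show ?thesis unfolding St_def block_sum_def using assms by (simp add: sum_distrib_left field_simps)
qed

lemma block_sum_diff_same_block:
  assumes "T \<le> t" "ell ms t = ell ms T"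
  shows "block_sum G t - block_sum G T = G (ell ms T) (tbar ms T + (t - T)) - G (ell ms T) (tbar ms T)"
  using assms unfolding block_sum_def tbar_def by simp

lemma block_sum_diff_later_block:
  assumes "T > 0" "ell ms T < ell ms t"
  shows "block_sum G t - block_sum G T = (G (ell ms T) (ms (ell ms T)) - G (ell ms T) (tbar ms T))
     + (\<Sum>k=Suc (ell ms T)..<ell ms t. G k (ms k)) + G (ell ms t) (tbar ms t)"
proof -
  let ?k = "ell ms T" and ?l = "ell ms t"
  have "(\<Sum>k=1..<?l. G k (ms k)) = (\<Sum>k=1..<?k. G k (ms k)) + (\<Sum>k=?k..<?l. G k (ms k))"
    using ell_ge_1[OF assms(1)] assms by (intro sum.atLeastLessThan_concat[symmetric]) auto
  also have "(\<Sum>k=?k..<?l. G k (ms k)) = G ?k (ms ?k) + (\<Sum>k=Suc ?k..<?l. G k (ms k))"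
    using assms by (intro sum.atLeast_Suc_lessThan)
  finally show ?thesis unfolding block_sum_def by simp
qed

lemma abs_block_sum_diff_le:
  assumes T: "0 < T" "T \<le> t" "t < T'" and b3: "b3 \<ge> 0"
    and first: "\<And>s. 0 \<le> s \<Longrightarrow> s \<le> Mpart ms (ell ms T) - T \<Longrightarrow> s < T' - T \<Longrightarrow>
          \<bar>G (ell ms T) (tbar ms T + s) - G (ell ms T) (tbar ms T)\<bar> \<le> b1"
    and middle: "(\<Sum>k=Suc (ell ms T)..<ell ms T'. \<bar>G k (ms k)\<bar>) \<le> b2"
    and last: "\<And>k u. Suc (ell ms T) \<le> k \<Longrightarrow> k \<le> ell ms T' \<Longrightarrow> 0 < u \<Longrightarrow> u \<le> ms k \<Longrightarrow>
          u < T' - Mpart ms (k - 1) \<Longrightarrow> \<bar>G k u\<bar> \<le> b3"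
  shows "\<bar>block_sum G t - block_sum G T\<bar> \<le> b1 + b2 + b3"
proof -
  let ?k = "ell ms T" and ?l = "ell ms t"
  have t: "t > 0" using T by simp
  have kl: "?k \<le> ?l" "?l \<le> ell ms T'" using T by (auto intro: ell_mono)
  have "0 \<le> (\<Sum>k=Suc ?k..<ell ms T'. \<bar>G k (ms k)\<bar>)" by (rule sum_nonneg) simp
  with middle have b2: "b2 \<ge> 0" by linarith
  show ?thesis
  proof (cases "?l = ?k")
    case True
    then have "t \<le> Mpart ms ?k" using le_Mpart_ell[of t] by simp
    then show ?thesis
      using block_sum_diff_same_block[OF T(2) True] first[of "t - T"] T b2 b3 by auto
  next
    case False
    then have kl': "?k < ?l" using kl by simp
    have "\<bar>G ?k (ms ?k) - G ?k (tbar ms T)\<bar> \<le> b1"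
    proof -
      have "ms ?k = tbar ms T + (Mpart ms ?k - T)"
        using Mpart_ell[OF T(1)] unfolding tbar_def by simp
      moreover have "Mpart ms ?k < t" using kl' by (simp add: less_ell_iff)
      ultimately show ?thesis using first[of "Mpart ms ?k - T"] le_Mpart_ell[of T] T by auto
    qed
    moreover have "\<bar>\<Sum>k=Suc ?k..<?l. G k (ms k)\<bar> \<le> b2"
    proof -
      have "(\<Sum>k=Suc ?k..<?l. \<bar>G k (ms k)\<bar>) \<le> (\<Sum>k=Suc ?k..<ell ms T'. \<bar>G k (ms k)\<bar>)"
        using kl by (intro sum_mono2) auto
      then show ?thesis using sum_abs[of "\<lambda>k. G k (ms k)" "{Suc ?k..<?l}"] middle by linarith
    qed
    moreover have "\<bar>G ?l (tbar ms t)\<bar> \<le> b3"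
      using tbar_pos[OF t] tbar_le_ms[OF t] kl kl' T by (intro last) (auto simp: tbar_def)
    ultimately show ?thesis
      unfolding block_sum_diff_later_block[OF T(1) kl'] by linarith
  qed
qed

end

definition sup_increment :: "(nat \<Rightarrow> real \<Rightarrow> 'a \<Rightarrow> real) \<Rightarrow> nat \<Rightarrow> real \<Rightarrow> real \<Rightarrow> 'a \<Rightarrow> ereal" where
  "sup_increment X k r m \<omega> = (SUP s\<in>{0..m}. ereal \<bar>(r + s) * X k (r + s) \<omega> - r * X k r \<omega>\<bar>)"

lemma increment_le_sup_increment:
  "0 \<le> s \<Longrightarrow> s \<le> m \<Longrightarrow> ereal \<bar>(r + s) * X k (r + s) \<omega> - r * X k r \<omega>\<bar> \<le> sup_increment X k r m \<omega>"
  unfolding sup_increment_def by (intro SUP_upper) auto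

text \<open>The hypotheses in the form used below: \<open>small_prob\<close> is (S1), \<open>prob_sup_increment\<close> is (S3)
  with the exponent lowered below 2, and \<open>L1_bound\<close> is derived from (S2).\<close>

locale slln_setting = prob_space M + block_lengths ms
  for M :: "'a measure" and ms :: "nat \<Rightarrow> real" +
  fixes X :: "nat \<Rightarrow> real \<Rightarrow> 'a \<Rightarrow> real" and \<beta> C3 \<delta> K0 :: real
  assumes integrable_X: "\<And>k m. m > 0 \<Longrightarrow> integrable M (X k m)"
    and indep_X: "indep_vars (\<lambda>_. Pi\<^sub>M {0<..} (\<lambda>_. borel)) (\<lambda>k \<omega>. restrict (\<lambda>m. X k m \<omega>) {0<..}) UNIV"
    and mean_zero: "\<And>k m. m > 0 \<Longrightarrow> expectation (X k m) = 0"
    and \<delta>_pos: "\<delta> > 0"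
    and small_prob: "\<And>\<epsilon>. \<epsilon> > 0 \<Longrightarrow>
          \<exists>Cc. \<forall>k m. m > 0 \<longrightarrow> prob {\<omega>\<in>space M. \<epsilon> < \<bar>X k m \<omega>\<bar>} \<le> Cc * m powr -\<delta>"
    and \<beta>: "1 < \<beta>" "\<beta> < 2" and C3_pos: "C3 > 0"
    and sets_sup_increment: "\<And>k r m c. r > 0 \<Longrightarrow> m > 0 \<Longrightarrow>
          {\<omega>\<in>space M. ereal c \<le> sup_increment X k r m \<omega>} \<in> sets M"
    and prob_sup_increment: "\<And>k r m t. r > 0 \<Longrightarrow> m > 0 \<Longrightarrow> t > 0 \<Longrightarrow>
          prob {\<omega>\<in>space M. ereal t \<le> sup_increment X k r m \<omega>} \<le> C3 * (m / t) powr \<beta>"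
    and L1_bound: "\<And>k m. m > 0 \<Longrightarrow> expectation (\<lambda>\<omega>. \<bar>X k m \<omega>\<bar>) \<le> K0"
begin

lemma X_measurable [measurable]: "m > 0 \<Longrightarrow> X k m \<in> borel_measurable M"
  using integrable_X by auto

lemma K0_nonneg: "K0 \<ge> 0"
proof -
  have "0 \<le> expectation (\<lambda>\<omega>. \<bar>X 0 1 \<omega>\<bar>)" by (rule integral_nonneg_AE) auto
  then show ?thesis using L1_bound[of 1 0] by linarith
qed

lemma prob_abs_scaled_X_greater:
  assumes r: "r > 0" and y: "y > 0"
  shows "prob {\<omega>\<in>space M. y < \<bar>r * X k r \<omega>\<bar>} \<le> K0 * r / y"
proof -
  have "prob {\<omega>\<in>space M. y < \<bar>r * X k r \<omega>\<bar>} \<le> prob {\<omega>\<in>space M. y / r \<le> \<bar>X k r \<omega>\<bar>}"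
    using r by (intro finite_measure_mono) (auto simp: abs_mult field_simps)
  also have "\<dots> \<le> expectation (\<lambda>\<omega>. \<bar>X k r \<omega>\<bar>) / (y / r)"
    using r y integrable_X[OF r] by (intro integral_Markov_inequality_measure[of _ _ "space M"]) auto
  also have "\<dots> \<le> K0 / (y / r)" using L1_bound[OF r] r y by (intro divide_right_mono) auto
  finally show ?thesis by simp
qed

definition "tail_const = C3 * 2 powr \<beta>"

lemma tail_const_nonneg: "tail_const \<ge> 0"
  unfolding tail_const_def using C3_pos by simp

text \<open>For small \<open>r\<close>, \<open>c X\<^sub>k(c)\<close> is \<open>r X\<^sub>k(r)\<close>, which tends to 0 in probability by the
  \<open>L\<^sup>1\<close> bound, plus an increment controlled by \<open>prob_sup_increment\<close>.\<close>

lemma prob_abs_X_greater: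
  assumes c: "c > 0" and x: "x > 0"
  shows "prob {\<omega>\<in>space M. x < \<bar>X k c \<omega>\<bar>} \<le> tail_const * x powr -\<beta>"
proof -
  define B where "B = tail_const * x powr -\<beta>"
  define r where "r n = c / (2 + real n)" for n :: nat
  have r: "0 < r n" "r n < c" for n
  proof -
    have "0 < c * (real n + 1)" using c by auto
    then show "0 < r n" "r n < c" using c unfolding r_def by (auto simp: field_simps)
  qed
  have bound: "prob {\<omega>\<in>space M. x < \<bar>X k c \<omega>\<bar>} \<le> K0 * r n / (x * c / 2) + B" for n
  proof -
    let ?A1 = "{\<omega>\<in>space M. x * c / 2 < \<bar>r n * X k (r n) \<omega>\<bar>}"
    let ?A2 = "{\<omega>\<in>space M. ereal (x * c / 2) \<le> sup_increment X k (r n) (c - r n) \<omega>}"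
    have "{\<omega>\<in>space M. x < \<bar>X k c \<omega>\<bar>} \<subseteq> ?A1 \<union> ?A2"
    proof
      fix \<omega> assume \<omega>: "\<omega> \<in> {\<omega>\<in>space M. x < \<bar>X k c \<omega>\<bar>}"
      have inc: "ereal \<bar>c * X k c \<omega> - r n * X k (r n) \<omega>\<bar> \<le> sup_increment X k (r n) (c - r n) \<omega>"
        using increment_le_sup_increment[of "c - r n" "c - r n" "r n" X k \<omega>] r[of n] by simp
      have "x * c < \<bar>c * X k c \<omega>\<bar>" using \<omega> c by (auto simp: abs_mult)
      then have "x * c / 2 < \<bar>r n * X k (r n) \<omega>\<bar> \<or> x * c / 2 \<le> \<bar>c * X k c \<omega> - r n * X k (r n) \<omega>\<bar>"
        by linarith
      then show "\<omega> \<in> ?A1 \<union> ?A2" using \<omega> order_trans[OF _ inc] by auto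
    qed
    then have "prob {\<omega>\<in>space M. x < \<bar>X k c \<omega>\<bar>} \<le> prob ?A1 + prob ?A2"
      using r[of n] c x
      by (intro order_trans[OF finite_measure_mono measure_Un_le] sets.Un sets_sup_increment) auto
    also have "prob ?A1 \<le> K0 * r n / (x * c / 2)"
      using r[of n] c x by (intro prob_abs_scaled_X_greater) auto
    also have "prob ?A2 \<le> C3 * ((c - r n) / (x * c / 2)) powr \<beta>"
      using r[of n] c x by (intro prob_sup_increment) auto
    also have "\<dots> \<le> C3 * (2 / x) powr \<beta>"
      using r[of n] c x C3_pos \<beta> by (intro mult_left_mono powr_mono2) (auto simp: field_simps)
    also have "C3 * (2 / x) powr \<beta> = B"
      unfolding B_def tail_const_def
      by (subst powr_divide) (use x in \<open>auto simp: powr_minus divide_inverse\<close>)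
    finally show ?thesis by simp
  qed
  have "(\<lambda>n. c / (2 + real n)) \<longlonglongrightarrow> 0"
    by (intro real_tendsto_divide_at_top[OF tendsto_const]
        filterlim_tendsto_add_at_top[OF tendsto_const filterlim_real_sequentially])
  then have "(\<lambda>n. K0 * r n / (x * c / 2) + B) \<longlonglongrightarrow> K0 * 0 / (x * c / 2) + B"
    unfolding r_def by (intro tendsto_intros) (use x c in auto)
  then show ?thesis using LIMSEQ_le_const bound unfolding B_def by fastforce
qed

lemma indep_vars_X_at:
  fixes g :: "nat \<Rightarrow> real \<Rightarrow> real" and c :: "nat \<Rightarrow> real"
  assumes g: "\<And>k. k \<in> K \<Longrightarrow> g k \<in> borel_measurable borel" and c: "\<And>k. k \<in> K \<Longrightarrow> c k > 0"
  shows "indep_vars (\<lambda>_. borel) (\<lambda>k \<omega>. g k (X k (c k) \<omega>)) K"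
proof -
  have "indep_vars (\<lambda>_. borel) (\<lambda>k \<omega>. (\<lambda>p. g k (p (c k))) (restrict (\<lambda>m. X k m \<omega>) {0<..})) K"
  proof (rule indep_vars_compose2[OF indep_vars_subset[OF indep_X]])
    fix k assume k: "k \<in> K"
    note g[OF k, measurable]
    have "c k \<in> {0<..}" using c k by auto
    then show "(\<lambda>p. g k (p (c k))) \<in> measurable (Pi\<^sub>M {0<..} (\<lambda>_. borel)) borel"
      by measurable
  qed auto
  then show ?thesis
    by (rule indep_vars_cong[THEN iffD1, rotated 3]) (auto simp: c)
qed

lemma small_prob_const_nonneg:
  assumes "\<And>k m. m > 0 \<Longrightarrow> prob {\<omega>\<in>space M. \<epsilon> < \<bar>X k m \<omega>\<bar>} \<le> Cc * m powr -\<delta>"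
  shows "Cc \<ge> 0"
proof -
  have "prob {\<omega>\<in>space M. \<epsilon> < \<bar>X 0 1 \<omega>\<bar>} \<le> Cc" using assms[of 1 0] by simp
  then show ?thesis using measure_nonneg[of M "{\<omega>\<in>space M. \<epsilon> < \<bar>X 0 1 \<omega>\<bar>}"] by linarith
qed

lemma prob_large_weights:
  fixes c :: "nat \<Rightarrow> real" and T a :: real
  assumes K: "finite K" and c: "\<And>k. k \<in> K \<Longrightarrow> c k > 0" and sum_c: "sum c K \<le> T" and T: "T > 0"
    and Cc: "\<And>k m. m > 0 \<Longrightarrow> prob {\<omega>\<in>space M. \<epsilon> < \<bar>X k m \<omega>\<bar>} \<le> Cc * m powr -\<delta>"
  shows "prob (\<Union>k\<in>{k\<in>K. T powr a < c k}. {\<omega>\<in>space M. \<epsilon> < \<bar>X k (c k) \<omega>\<bar>})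
           \<le> Cc * T powr (1 - a - a * \<delta>)"
proof -
  let ?Kl = "{k\<in>K. T powr a < c k}"
  have "prob (\<Union>k\<in>?Kl. {\<omega>\<in>space M. \<epsilon> < \<bar>X k (c k) \<omega>\<bar>}) \<le> (\<Sum>k\<in>?Kl. prob {\<omega>\<in>space M. \<epsilon> < \<bar>X k (c k) \<omega>\<bar>})"
    using K c by (intro finite_measure_subadditive_finite) (auto intro: measurable_sets)
  also have "\<dots> \<le> (\<Sum>k\<in>?Kl. Cc * (c k * T powr (-a - a * \<delta>)))"
  proof (intro sum_mono)
    fix k assume k: "k \<in> ?Kl"
    have "prob {\<omega>\<in>space M. \<epsilon> < \<bar>X k (c k) \<omega>\<bar>} \<le> Cc * c k powr -\<delta>" using Cc c k by auto
    also have "\<dots> \<le> Cc * (c k * T powr (-a - a * \<delta>))"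
      using k T \<delta>_pos small_prob_const_nonneg[OF Cc]
      by (intro mult_left_mono powr_neg_le_of_powr_less) auto
    finally show "prob {\<omega>\<in>space M. \<epsilon> < \<bar>X k (c k) \<omega>\<bar>} \<le> Cc * (c k * T powr (-a - a * \<delta>))" .
  qed
  also have "\<dots> = Cc * T powr (-a - a * \<delta>) * (\<Sum>k\<in>?Kl. c k)"
    by (simp add: sum_distrib_left sum_distrib_right mult_ac)
  also have "\<dots> \<le> Cc * T powr (-a - a * \<delta>) * T"
    using sum_mono2[OF K, of ?Kl c] c sum_c small_prob_const_nonneg[OF Cc]
    by (intro mult_left_mono) (auto simp: less_imp_le)
  also have "\<dots> = Cc * T powr (1 - a - a * \<delta>)"
  proof -
    have "1 - a - a * \<delta> = (-a - a * \<delta>) + 1" by simp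
    then show ?thesis using T by (simp only: powr_add powr_one mult.assoc)
  qed
  finally show ?thesis .
qed

definition "bias_const = 2 * tail_const / (1 - 2 powr (1 - \<beta>))"
definition "var_const = tail_const * 2 powr \<beta> / (1 - 2 powr (\<beta> - 2))"

lemma bias_const_nonneg: "bias_const \<ge> 0" and var_const_nonneg: "var_const \<ge> 0"
  using tail_const_nonneg \<beta> powr_less_one[of 2 "1 - \<beta>"] powr_less_one[of 2 "\<beta> - 2"]
  unfolding bias_const_def var_const_def by auto

text \<open>With \<open>a = split_exp\<close>, weights \<open>c \<le> T powr a\<close> are handled by truncation, with an error of
  order \<open>T powr (-(1 - a) * (\<beta> - 1))\<close>, and larger weights by \<open>small_prob\<close>, with an error of order
  \<open>T powr (1 - a * (1 + \<delta>))\<close>; both decay since \<open>1 / (1 + \<delta>) < a < 1\<close>.\<close>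

definition "split_exp = (2 + \<delta>) / (2 * (1 + \<delta>))"
definition "decay_exp = min ((1 - split_exp) * (\<beta> - 1)) (split_exp * (1 + \<delta>) - 1)"

lemma decay_exp_pos: "decay_exp > 0"
proof -
  have "split_exp * (1 + \<delta>) = (2 + \<delta>) / 2" and "split_exp < 1"
    using \<delta>_pos unfolding split_exp_def by (auto simp: field_simps)
  then show ?thesis using \<beta> \<delta>_pos unfolding decay_exp_def by auto
qed

lemma prob_small_weights_deviation:
  fixes K :: "nat set" and c :: "nat \<Rightarrow> real" and \<phi> :: "real \<Rightarrow> real"
  assumes K: "finite K" and c: "\<And>k. k \<in> K \<Longrightarrow> 0 < c k \<and> c k \<le> T powr split_exp"
    and sum_c: "sum c K \<le> T" and T: "T \<ge> 1" and \<epsilon>: "\<epsilon> > 0"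
    and \<phi>[measurable]: "\<phi> \<in> borel_measurable borel" and abs_\<phi>: "\<And>x. \<bar>\<phi> x\<bar> = \<bar>x\<bar>"
  shows "\<exists>E\<in>sets M. prob E \<le> (tail_const + var_const / \<epsilon>^2) * T powr -decay_exp \<and>
     (\<forall>\<omega>\<in>space M - E. \<bar>\<Sum>k\<in>K. c k * \<phi> (X k (c k) \<omega>) - c k * expectation (\<lambda>\<omega>. \<phi> (X k (c k) \<omega>))\<bar>
        < \<epsilon> * T + bias_const * T powr (1 - decay_exp))"
proof -
  define Z where "Z k = (\<lambda>\<omega>. c k * \<phi> (X k (c k) \<omega>))" for k
  define \<rho> where "\<rho> = (\<Sum>k\<in>K. (c k / T) powr \<beta>)"
  define E where "E = {\<omega>\<in>space M. \<epsilon> * T + bias_const * T * \<rho> \<le> \<bar>\<Sum>k\<in>K. Z k \<omega> - expectation (Z k)\<bar>}"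
  have T0: "T > 0" using T by simp
  have \<rho>: "\<rho> \<le> T powr -decay_exp"
  proof -
    have "\<rho> \<le> T powr ((split_exp - 1) * (\<beta> - 1))"
      unfolding \<rho>_def using K c sum_c T0 \<beta> by (intro sum_powr_small_weights_le) auto
    also have "\<dots> \<le> T powr -decay_exp"
      using T by (intro powr_mono) (auto simp: decay_exp_def algebra_simps)
    finally show ?thesis .
  qed
  have sum_a: "(\<Sum>k\<in>K. tail_const * c k powr \<beta>) * T powr -\<beta> = tail_const * \<rho>"
  proof -
    have "(\<Sum>k\<in>K. tail_const * c k powr \<beta>) * T powr -\<beta> = (\<Sum>k\<in>K. tail_const * (c k / T) powr \<beta>)"
      unfolding sum_distrib_right using c T0
      by (intro sum.cong refl) (auto simp: powr_divide powr_minus less_imp_le field_simps)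
    then show ?thesis by (simp add: \<rho>_def sum_distrib_left)
  qed
  have Z_meas: "(\<lambda>\<omega>. Z k \<omega> - expectation (Z k)) \<in> borel_measurable M" if "k \<in> K" for k
  proof -
    have "c k > 0" using c that by auto
    note X_measurable[OF this, measurable]
    show ?thesis unfolding Z_def by measurable
  qed
  then have [measurable]: "(\<lambda>\<omega>. \<Sum>k\<in>K. Z k \<omega> - expectation (Z k)) \<in> borel_measurable M"
    by (rule borel_measurable_sum)
  have "prob E \<le> (1 + 2 powr \<beta> / (1 - 2 powr (\<beta> - 2)) / \<epsilon>^2) * (tail_const * \<rho>)"
  proof -
    have "prob {\<omega>\<in>space M. \<epsilon> * T + 2 / (1 - 2 powr (1 - \<beta>)) * T
                 * ((\<Sum>k\<in>K. tail_const * c k powr \<beta>) * T powr -\<beta>) \<le> \<bar>\<Sum>k\<in>K. Z k \<omega> - expectation (Z k)\<bar>}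
        \<le> (1 + 2 powr \<beta> / (1 - 2 powr (\<beta> - 2)) / \<epsilon>^2) * ((\<Sum>k\<in>K. tail_const * c k powr \<beta>) * T powr -\<beta>)"
    proof (rule prob_abs_sum_centered_ge_le[OF K _ _ \<beta> T0 \<epsilon>])
      show "indep_vars (\<lambda>_. borel) Z K" unfolding Z_def using c by (intro indep_vars_X_at) auto
      fix k assume k: "k \<in> K"
      then have ck: "c k > 0" using c by auto
      show "integrable M (Z k)"
        unfolding Z_def using ck by (intro integrable_mult_right Bochner_Integration.integrable_bound[OF integrable_X])
          (auto simp: abs_\<phi>)
      fix x :: real assume x: "x > 0"
      have "prob {\<omega>\<in>space M. x < \<bar>Z k \<omega>\<bar>} = prob {\<omega>\<in>space M. x / c k < \<bar>X k (c k) \<omega>\<bar>}"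
        using ck by (simp add: Z_def abs_mult abs_\<phi> field_simps)
      also have "\<dots> \<le> tail_const * (x / c k) powr -\<beta>" using ck x by (intro prob_abs_X_greater) auto
      also have "\<dots> = tail_const * c k powr \<beta> * x powr -\<beta>"
        using ck x by (simp add: powr_minus powr_divide less_imp_le field_simps)
      finally show "prob {\<omega>\<in>space M. x < \<bar>Z k \<omega>\<bar>} \<le> tail_const * c k powr \<beta> * x powr -\<beta>" .
    qed
    moreover have "2 / (1 - 2 powr (1 - \<beta>)) * T * (tail_const * \<rho>) = bias_const * T * \<rho>"
      by (simp add: bias_const_def)
    ultimately show ?thesis unfolding sum_a E_def by simp
  qed
  also have "\<dots> = (tail_const + var_const / \<epsilon>^2) * \<rho>" by (simp add: var_const_def field_simps)
  also have "\<dots> \<le> (tail_const + var_const / \<epsilon>^2) * T powr -decay_exp"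
    using \<rho> tail_const_nonneg var_const_nonneg by (intro mult_left_mono) auto
  finally have prob_E: "prob E \<le> (tail_const + var_const / \<epsilon>^2) * T powr -decay_exp" .
  have bias: "bias_const * T * \<rho> \<le> bias_const * T powr (1 - decay_exp)"
    using \<rho> bias_const_nonneg T0 powr_add[of T 1 "-decay_exp"] by (simp add: mult_left_mono mult.assoc)
  show ?thesis
  proof (intro bexI[of _ E] conjI ballI prob_E)
    show "E \<in> sets M" unfolding E_def by measurable
    fix \<omega> assume \<omega>: "\<omega> \<in> space M - E"
    have "(\<Sum>k\<in>K. c k * \<phi> (X k (c k) \<omega>) - c k * expectation (\<lambda>\<omega>. \<phi> (X k (c k) \<omega>)))
        = (\<Sum>k\<in>K. Z k \<omega> - expectation (Z k))"
      by (simp add: Z_def)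
    then show "\<bar>\<Sum>k\<in>K. c k * \<phi> (X k (c k) \<omega>) - c k * expectation (\<lambda>\<omega>. \<phi> (X k (c k) \<omega>))\<bar>
        < \<epsilon> * T + bias_const * T powr (1 - decay_exp)"
      using \<omega> bias unfolding E_def by auto
  qed
qed

lemma prob_weighted_sum_deviation:
  fixes K :: "nat set" and c :: "nat \<Rightarrow> real" and \<phi> :: "real \<Rightarrow> real"
  assumes K: "finite K" and c: "\<And>k. k \<in> K \<Longrightarrow> c k > 0" and sum_c: "sum c K \<le> T" and T: "T \<ge> 1"
    and \<epsilon>: "\<epsilon> > 0" and \<phi>: "\<phi> \<in> borel_measurable borel" and abs_\<phi>: "\<And>x. \<bar>\<phi> x\<bar> = \<bar>x\<bar>"
    and Cc: "\<And>k m. m > 0 \<Longrightarrow> prob {\<omega>\<in>space M. \<epsilon> < \<bar>X k m \<omega>\<bar>} \<le> Cc * m powr -\<delta>"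
  shows "\<exists>E\<in>sets M. prob E \<le> (tail_const + var_const / \<epsilon>^2 + Cc) * T powr -decay_exp \<and>
     (\<forall>\<omega>\<in>space M - E. \<bar>(\<Sum>k\<in>K. c k * \<phi> (X k (c k) \<omega>))
        - (\<Sum>k\<in>{k\<in>K. c k \<le> T powr split_exp}. c k * expectation (\<lambda>\<omega>. \<phi> (X k (c k) \<omega>)))\<bar>
        \<le> 2 * \<epsilon> * T + bias_const * T powr (1 - decay_exp))"
proof -
  define Ks where "Ks = {k\<in>K. c k \<le> T powr split_exp}"
  define Kl where "Kl = {k\<in>K. T powr split_exp < c k}"
  have fin: "finite Ks" "finite Kl" using K by (auto simp: Ks_def Kl_def)
  have sum_le: "sum c Ks \<le> T" "sum c Kl \<le> T"
    using sum_mono2[OF K, of Ks c] sum_mono2[OF K, of Kl c] c sum_c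
    by (auto simp: Ks_def Kl_def less_imp_le)
  obtain Es where Es: "Es \<in> sets M" "prob Es \<le> (tail_const + var_const / \<epsilon>^2) * T powr -decay_exp"
    and small: "\<And>\<omega>. \<omega> \<in> space M - Es \<Longrightarrow>
      \<bar>\<Sum>k\<in>Ks. c k * \<phi> (X k (c k) \<omega>) - c k * expectation (\<lambda>\<omega>. \<phi> (X k (c k) \<omega>))\<bar>
        < \<epsilon> * T + bias_const * T powr (1 - decay_exp)"
    using prob_small_weights_deviation[OF fin(1) _ sum_le(1) T \<epsilon> \<phi> abs_\<phi>] c by (auto simp: Ks_def)
  define El where "El = (\<Union>k\<in>Kl. {\<omega>\<in>space M. \<epsilon> < \<bar>X k (c k) \<omega>\<bar>})"
  have El: "El \<in> sets M" unfolding El_def using fin c by (auto simp: Kl_def intro!: sets.finite_UN measurable_sets)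
  have "prob El \<le> Cc * T powr (1 - split_exp - split_exp * \<delta>)"
    unfolding El_def Kl_def using K c sum_c T Cc by (intro prob_large_weights) auto
  also have "\<dots> \<le> Cc * T powr -decay_exp"
    using T small_prob_const_nonneg[OF Cc] by (intro mult_left_mono powr_mono) (auto simp: decay_exp_def algebra_simps)
  finally have prob_El: "prob El \<le> Cc * T powr -decay_exp" .
  show ?thesis
  proof (intro bexI[of _ "Es \<union> El"] conjI ballI)
    show "prob (Es \<union> El) \<le> (tail_const + var_const / \<epsilon>^2 + Cc) * T powr -decay_exp"
      using measure_Un_le[OF Es(1) El] Es(2) prob_El by (simp add: distrib_right)
    fix \<omega> assume \<omega>: "\<omega> \<in> space M - (Es \<union> El)"
    have "K = Ks \<union> Kl" "Ks \<inter> Kl = {}" by (auto simp: Ks_def Kl_def)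
    then have "(\<Sum>k\<in>K. c k * \<phi> (X k (c k) \<omega>)) - (\<Sum>k\<in>Ks. c k * expectation (\<lambda>\<omega>. \<phi> (X k (c k) \<omega>)))
        = (\<Sum>k\<in>Ks. c k * \<phi> (X k (c k) \<omega>) - c k * expectation (\<lambda>\<omega>. \<phi> (X k (c k) \<omega>)))
          + (\<Sum>k\<in>Kl. c k * \<phi> (X k (c k) \<omega>))"
      using fin by (simp add: sum.union_disjoint sum_subtractf)
    moreover note abs_triangle_ineq[of
        "\<Sum>k\<in>Ks. c k * \<phi> (X k (c k) \<omega>) - c k * expectation (\<lambda>\<omega>. \<phi> (X k (c k) \<omega>))"
        "\<Sum>k\<in>Kl. c k * \<phi> (X k (c k) \<omega>)"]
    moreover have "\<bar>\<Sum>k\<in>Kl. c k * \<phi> (X k (c k) \<omega>)\<bar> \<le> \<epsilon> * T"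
    proof -
      have "\<bar>c k * \<phi> (X k (c k) \<omega>)\<bar> \<le> c k * \<epsilon>" if "k \<in> Kl" for k
      proof -
        have "\<bar>X k (c k) \<omega>\<bar> \<le> \<epsilon>" "c k > 0" using \<omega> c that by (auto simp: El_def Kl_def)
        then show ?thesis by (simp add: abs_mult abs_\<phi> mult_left_mono)
      qed
      then have "\<bar>\<Sum>k\<in>Kl. c k * \<phi> (X k (c k) \<omega>)\<bar> \<le> sum c Kl * \<epsilon>"
        unfolding sum_distrib_right by (intro order_trans[OF sum_abs] sum_mono)
      also have "\<dots> \<le> \<epsilon> * T" using sum_le(2) \<epsilon> by (simp add: mult.commute mult_left_mono)
      finally show ?thesis .
    qed
    ultimately show "\<bar>(\<Sum>k\<in>K. c k * \<phi> (X k (c k) \<omega>))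
        - (\<Sum>k\<in>{k\<in>K. c k \<le> T powr split_exp}. c k * expectation (\<lambda>\<omega>. \<phi> (X k (c k) \<omega>)))\<bar>
        \<le> 2 * \<epsilon> * T + bias_const * T powr (1 - decay_exp)"
      using small[of \<omega>] \<omega> unfolding Ks_def[symmetric] by auto
  qed (use Es El in auto)
qed

definition increment_event :: "nat \<Rightarrow> real \<Rightarrow> real \<Rightarrow> nat \<Rightarrow> 'a set" where
  "increment_event k len y n =
     {\<omega>\<in>space M. y / 2 < \<bar>len / (real n + 2) * X k (len / (real n + 2)) \<omega>\<bar>}
     \<union> {\<omega>\<in>space M. ereal (y / 2) \<le> sup_increment X k (len / (real n + 2)) len \<omega>}"

text \<open>The event that \<open>\<bar>u X\<^sub>k(u)\<bar> > y\<close> for some \<open>0 < u \<le> len\<close> need not be measurable; it is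
  covered by the following liminf of events, since for small \<open>r\<close> the value \<open>u X\<^sub>k(u)\<close> is
  \<open>r X\<^sub>k(r)\<close> plus an increment.\<close>

definition path_large_event :: "nat \<Rightarrow> real \<Rightarrow> real \<Rightarrow> 'a set" where
  "path_large_event k len y = (\<Union>N. \<Inter>n. increment_event k len y (n + N))"

lemma sets_increment_event: "len > 0 \<Longrightarrow> increment_event k len y n \<in> sets M"
  unfolding increment_event_def by (intro sets.Un sets_sup_increment) auto

lemma sets_path_large_event: "len > 0 \<Longrightarrow> path_large_event k len y \<in> sets M"
  unfolding path_large_event_def using sets_increment_event by auto

lemma prob_path_large_event:
  assumes len: "len > 0" and y: "y > 0"
  shows "prob (path_large_event k len y) \<le> C3 * (2 * len / y) powr \<beta>"
proof -
  define B where "B N = (\<Inter>n. increment_event k len y (n + N))" for N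
  have sets_B: "B N \<in> sets M" for N unfolding B_def using sets_increment_event len by auto
  have "incseq B"
  proof (intro monoI subsetI)
    fix m n :: nat and \<omega> assume "m \<le> n" "\<omega> \<in> B m"
    then have "\<omega> \<in> increment_event k len y ((i + (n - m)) + m)" for i
      unfolding B_def by blast
    with \<open>m \<le> n\<close> show "\<omega> \<in> B n" unfolding B_def by simp
  qed
  then have lim: "(\<lambda>N. prob (B N)) \<longlonglongrightarrow> prob (\<Union>N. B N)"
    using sets_B by (intro finite_Lim_measure_incseq) auto
  have "prob (B N) \<le> C3 * (2 * len / y) powr \<beta>" for N
  proof -
    define r where "r n = len / (real (n + N) + 2)" for n
    have r: "0 < r n" "r n \<le> len" for n using len unfolding r_def by (auto simp: field_simps)
    have bound: "prob (B N) \<le> K0 * r n / (y / 2) + C3 * (2 * len / y) powr \<beta>" for n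
    proof -
      have "prob (B N) \<le> prob (increment_event k len y (n + N))"
        using sets_increment_event[OF len] by (intro finite_measure_mono) (auto simp: B_def)
      also have "\<dots> \<le> prob {\<omega>\<in>space M. y / 2 < \<bar>r n * X k (r n) \<omega>\<bar>}
          + prob {\<omega>\<in>space M. ereal (y / 2) \<le> sup_increment X k (r n) len \<omega>}"
        unfolding increment_event_def r_def using r len y
        by (intro measure_Un_le sets_sup_increment) (auto simp: r_def)
      also have "prob {\<omega>\<in>space M. y / 2 < \<bar>r n * X k (r n) \<omega>\<bar>} \<le> K0 * r n / (y / 2)"
        using r y by (intro prob_abs_scaled_X_greater) auto
      also have "prob {\<omega>\<in>space M. ereal (y / 2) \<le> sup_increment X k (r n) len \<omega>}
          \<le> C3 * (len / (y / 2)) powr \<beta>"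
        using r y len by (intro prob_sup_increment) auto
      finally show ?thesis by (simp add: field_simps)
    qed
    have "(\<lambda>n. len / ((real N + 2) + real n)) \<longlonglongrightarrow> 0"
      by (intro real_tendsto_divide_at_top[OF tendsto_const]
          filterlim_tendsto_add_at_top[OF tendsto_const filterlim_real_sequentially])
    moreover have "(\<lambda>n. len / ((real N + 2) + real n)) = r" by (auto simp: r_def algebra_simps)
    ultimately have "r \<longlonglongrightarrow> 0" by simp
    then have "(\<lambda>n. K0 * r n / (y / 2) + C3 * (2 * len / y) powr \<beta>)
        \<longlonglongrightarrow> K0 * 0 / (y / 2) + C3 * (2 * len / y) powr \<beta>"
      by (intro tendsto_intros) (use y in auto)
    then show ?thesis using LIMSEQ_le_const bound by fastforce
  qed
  then show ?thesis
    using LIMSEQ_le_const2[OF lim] unfolding path_large_event_def B_def by blast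
qed

lemma abs_scaled_X_le_outside_path_large_event:
  assumes len: "len > 0" and \<omega>: "\<omega> \<in> space M" "\<omega> \<notin> path_large_event k len y"
    and u: "0 < u" "u \<le> len"
  shows "\<bar>u * X k u \<omega>\<bar> \<le> y"
proof (rule ccontr)
  assume large: "\<not> \<bar>u * X k u \<omega>\<bar> \<le> y"
  obtain N :: nat where N: "len / u \<le> real N" using real_arch_simple by blast
  have "\<omega> \<in> increment_event k len y (n + N)" for n
  proof -
    define r where "r = len / (real (n + N) + 2)"
    have "len \<le> u * real N" using N u by (simp add: divide_le_eq mult.commute)
    also have "\<dots> \<le> u * (real (n + N) + 2)" using u by (intro mult_left_mono) auto
    finally have r: "0 < r" "r \<le> u" using len u unfolding r_def by (auto simp: field_simps)
    have inc: "ereal \<bar>u * X k u \<omega> - r * X k r \<omega>\<bar> \<le> sup_increment X k r len \<omega>"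
      using increment_le_sup_increment[of "u - r" len r X k \<omega>] r u by simp
    have "y / 2 < \<bar>r * X k r \<omega>\<bar> \<or> y / 2 \<le> \<bar>u * X k u \<omega> - r * X k r \<omega>\<bar>"
      using large by linarith
    moreover have "y / 2 \<le> \<bar>u * X k u \<omega> - r * X k r \<omega>\<bar> \<Longrightarrow> ereal (y / 2) \<le> sup_increment X k r len \<omega>"
      by (rule order_trans[OF _ inc]) simp
    ultimately show ?thesis
      using \<omega>(1) unfolding increment_event_def r_def[symmetric] by auto
  qed
  then have "\<omega> \<in> path_large_event k len y" unfolding path_large_event_def by blast
  with \<omega> show False by simp
qed

lemma prob_abs_scaled_St_large:
  assumes T: "T \<ge> 1" and \<epsilon>: "\<epsilon> > 0"
    and Cc: "\<And>k m. m > 0 \<Longrightarrow> prob {\<omega>\<in>space M. \<epsilon> < \<bar>X k m \<omega>\<bar>} \<le> Cc * m powr -\<delta>"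
  shows "\<exists>E\<in>sets M. prob E \<le> (tail_const + var_const / \<epsilon>^2 + Cc) * T powr -decay_exp \<and>
     (\<forall>\<omega>\<in>space M - E. \<bar>T * St X ms T \<omega>\<bar> \<le> 2 * \<epsilon> * T + bias_const * T powr (1 - decay_exp))"
proof -
  have T0: "T > 0" using T by simp
  define l where "l = ell ms T"
  define c where "c k = (if k = l then tbar ms T else ms k)" for k
  have l: "l \<ge> 1" unfolding l_def using ell_ge_1[OF T0] .
  have ins: "{1..l} = insert l {1..<l}" using l by auto
  have c_pos: "c k > 0" if "k \<in> {1..l}" for k
    using that ms_pos tbar_pos[OF T0] by (auto simp: c_def)
  have c_ms: "(\<Sum>k=1..<l. f k (c k)) = (\<Sum>k=1..<l. f k (ms k))" for f :: "nat \<Rightarrow> real \<Rightarrow> real"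
    by (intro sum.cong) (auto simp: c_def)
  have sum_c: "sum c {1..l} = T"
  proof -
    have "(\<Sum>k=1..<l. ms k) = Mpart ms (l - 1)"
      using l unfolding Mpart_def by (intro sum.cong) auto
    then show ?thesis
      unfolding ins using c_ms[of "\<lambda>_ u. u"] by (simp add: c_def tbar_def l_def)
  qed
  have T_St: "T * St X ms T \<omega> = (\<Sum>k=1..l. c k * X k (c k) \<omega>)" for \<omega>
    unfolding St_eq_block_sum[OF T0] block_sum_def ins l_def[symmetric]
    using c_ms[of "\<lambda>k u. u * X k u \<omega>"] by (simp add: c_def)
  obtain E where "E \<in> sets M" "prob E \<le> (tail_const + var_const / \<epsilon>^2 + Cc) * T powr -decay_exp"
    and E: "\<And>\<omega>. \<omega> \<in> space M - E \<Longrightarrow> \<bar>(\<Sum>k=1..l. c k * X k (c k) \<omega>)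
        - (\<Sum>k\<in>{k\<in>{1..l}. c k \<le> T powr split_exp}. c k * expectation (X k (c k)))\<bar>
        \<le> 2 * \<epsilon> * T + bias_const * T powr (1 - decay_exp)"
    using prob_weighted_sum_deviation[of "{1..l}" c T \<epsilon> "\<lambda>x. x" Cc] c_pos sum_c T \<epsilon> Cc by auto
  moreover have "(\<Sum>k\<in>{k\<in>{1..l}. c k \<le> T powr split_exp}. c k * expectation (X k (c k))) = 0"
    using c_pos mean_zero by (intro sum.neutral) auto
  ultimately show ?thesis unfolding T_St by auto
qed

lemma prob_middle_blocks_large:
  assumes T: "T \<ge> 1" "T \<le> T'" "T' \<le> 2 * T" and \<epsilon>: "\<epsilon> > 0"
    and Cc: "\<And>k m. m > 0 \<Longrightarrow> prob {\<omega>\<in>space M. \<epsilon> < \<bar>X k m \<omega>\<bar>} \<le> Cc * m powr -\<delta>"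
  shows "\<exists>E\<in>sets M. prob E \<le> (tail_const + var_const / \<epsilon>^2 + Cc) * T powr -decay_exp \<and>
     (\<forall>\<omega>\<in>space M - E. (\<Sum>k=Suc (ell ms T)..<ell ms T'. \<bar>ms k * X k (ms k) \<omega>\<bar>)
        \<le> 2 * \<epsilon> * T + bias_const * T powr (1 - decay_exp) + K0 * (T' - T))"
proof -
  define K where "K = {Suc (ell ms T)..<ell ms T'}"
  define Ks where "Ks = {k\<in>K. ms k \<le> T powr split_exp}"
  have K_pos: "ms k > 0" if "k \<in> K" for k using that ms_pos by (auto simp: K_def)
  have sum_K: "sum ms K \<le> T' - T" unfolding K_def using T by (intro sum_ms_middle_blocks_le) auto
  obtain E where E_sets: "E \<in> sets M" and prob_E: "prob E \<le> (tail_const + var_const / \<epsilon>^2 + Cc) * T powr -decay_exp"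
    and E: "\<And>\<omega>. \<omega> \<in> space M - E \<Longrightarrow> \<bar>(\<Sum>k\<in>K. ms k * \<bar>X k (ms k) \<omega>\<bar>)
        - (\<Sum>k\<in>Ks. ms k * expectation (\<lambda>\<omega>. \<bar>X k (ms k) \<omega>\<bar>))\<bar>
        \<le> 2 * \<epsilon> * T + bias_const * T powr (1 - decay_exp)"
    using prob_weighted_sum_deviation[of K ms T \<epsilon> abs Cc] K_pos sum_K T \<epsilon> Cc
    unfolding Ks_def by (auto simp: K_def)
  have mean: "(\<Sum>k\<in>Ks. ms k * expectation (\<lambda>\<omega>. \<bar>X k (ms k) \<omega>\<bar>)) \<le> K0 * (T' - T)"
  proof -
    have "(\<Sum>k\<in>Ks. ms k * expectation (\<lambda>\<omega>. \<bar>X k (ms k) \<omega>\<bar>)) \<le> (\<Sum>k\<in>Ks. ms k * K0)"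
      using K_pos L1_bound by (intro sum_mono mult_left_mono) (auto simp: Ks_def less_imp_le)
    also have "\<dots> \<le> (\<Sum>k\<in>K. ms k) * K0"
      using K_pos K0_nonneg unfolding sum_distrib_right[symmetric]
      by (intro mult_right_mono sum_mono2) (auto simp: Ks_def K_def less_imp_le)
    also have "\<dots> \<le> K0 * (T' - T)" using sum_K K0_nonneg by (simp add: mult.commute mult_left_mono)
    finally show ?thesis .
  qed
  have abs_eq: "(\<Sum>k\<in>K. \<bar>ms k * X k (ms k) \<omega>\<bar>) = (\<Sum>k\<in>K. ms k * \<bar>X k (ms k) \<omega>\<bar>)" for \<omega>
  proof (intro sum.cong refl)
    fix k assume "k \<in> K"
    then have "ms k > 0" by (rule K_pos)
    then show "\<bar>ms k * X k (ms k) \<omega>\<bar> = ms k * \<bar>X k (ms k) \<omega>\<bar>" by (simp add: abs_mult)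
  qed
  show ?thesis
    unfolding K_def[symmetric]
  proof (intro bexI[OF _ E_sets] conjI prob_E ballI)
    fix \<omega> assume "\<omega> \<in> space M - E"
    then show "(\<Sum>k\<in>K. \<bar>ms k * X k (ms k) \<omega>\<bar>) \<le> 2 * \<epsilon> * T + bias_const * T powr (1 - decay_exp) + K0 * (T' - T)"
      using E mean abs_eq[of \<omega>] by fastforce
  qed
qed

lemma prob_first_block_increment_large:
  assumes T: "0 < T" "T < T'" and \<epsilon>: "\<epsilon> > 0"
  shows "\<exists>E\<in>sets M. prob E \<le> C3 * ((T' - T) / (\<epsilon> * T)) powr \<beta> \<and>
     (\<forall>\<omega>\<in>space M - E. \<forall>s. 0 \<le> s \<longrightarrow> s \<le> T' - T \<longrightarrow>
        \<bar>(tbar ms T + s) * X (ell ms T) (tbar ms T + s) \<omega> - tbar ms T * X (ell ms T) (tbar ms T) \<omega>\<bar> \<le> \<epsilon> * T)"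
proof -
  define E where "E = {\<omega>\<in>space M. ereal (\<epsilon> * T) \<le> sup_increment X (ell ms T) (tbar ms T) (T' - T) \<omega>}"
  show ?thesis
  proof (intro bexI[of _ E] conjI ballI allI impI)
    have pos: "tbar ms T > 0" "T' - T > 0" "\<epsilon> * T > 0" using tbar_pos T \<epsilon> by auto
    show "E \<in> sets M" unfolding E_def by (rule sets_sup_increment[OF pos(1,2)])
    show "prob E \<le> C3 * ((T' - T) / (\<epsilon> * T)) powr \<beta>"
      unfolding E_def by (rule prob_sup_increment[OF pos])
    fix \<omega> s assume \<omega>: "\<omega> \<in> space M - E" and s: "0 \<le> s" "s \<le> T' - T"
    have "ereal \<bar>(tbar ms T + s) * X (ell ms T) (tbar ms T + s) \<omega> - tbar ms T * X (ell ms T) (tbar ms T) \<omega>\<bar>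
        \<le> sup_increment X (ell ms T) (tbar ms T) (T' - T) \<omega>"
      using s by (rule increment_le_sup_increment)
    also have "\<dots> < ereal (\<epsilon> * T)" using \<omega> unfolding E_def by auto
    finally show "\<bar>(tbar ms T + s) * X (ell ms T) (tbar ms T + s) \<omega> - tbar ms T * X (ell ms T) (tbar ms T) \<omega>\<bar> \<le> \<epsilon> * T"
      by simp
  qed
qed

lemma prob_last_blocks_large:
  assumes T: "0 < T" "T < T'" and \<epsilon>: "\<epsilon> > 0"
  shows "\<exists>E\<in>sets M. prob E \<le> C3 * (2 * (T' - T) / (\<epsilon> * T)) powr \<beta> \<and>
     (\<forall>\<omega>\<in>space M - E. \<forall>k u. Suc (ell ms T) \<le> k \<longrightarrow> k \<le> ell ms T' \<longrightarrow> 0 < u \<longrightarrow> u \<le> ms k \<longrightarrow>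
        u < T' - Mpart ms (k - 1) \<longrightarrow> \<bar>u * X k u \<omega>\<bar> \<le> \<epsilon> * T)"
proof -
  define L where "L = {Suc (ell ms T)..ell ms T'}"
  define len where "len k = min (ms k) (T' - Mpart ms (k - 1))" for k
  define E where "E = (\<Union>k\<in>L. path_large_event k (len k) (\<epsilon> * T))"
  have len_pos: "len k > 0" if "k \<in> L" for k
  proof -
    have "Mpart ms (k - 1) < T'" using that by (auto simp: L_def less_ell_iff[symmetric])
    then show ?thesis using that ms_pos by (auto simp: len_def L_def)
  qed
  have sum_len: "sum len L \<le> T' - T"
  proof (cases "Suc (ell ms T) \<le> ell ms T'")
    case True
    let ?l = "ell ms T'"
    have "L = insert ?l {Suc (ell ms T)..?l - 1}" "?l \<notin> {Suc (ell ms T)..?l - 1}"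
      using True by (auto simp: L_def)
    then have "sum len L = len ?l + sum len {Suc (ell ms T)..?l - 1}" by simp
    also have "\<dots> \<le> (T' - Mpart ms (?l - 1)) + (\<Sum>k=Suc (ell ms T)..?l - 1. ms k)"
      by (intro add_mono sum_mono) (auto simp: len_def)
    also have "(\<Sum>k=Suc (ell ms T)..?l - 1. ms k) = Mpart ms (?l - 1) - Mpart ms (ell ms T)"
      using True by (intro sum_ms_eq_Mpart_diff) auto
    finally show ?thesis using le_Mpart_ell[of T] by linarith
  qed (use T in \<open>auto simp: L_def\<close>)
  have "prob E \<le> (\<Sum>k\<in>L. prob (path_large_event k (len k) (\<epsilon> * T)))"
    unfolding E_def using len_pos
    by (intro finite_measure_subadditive_finite) (auto simp: L_def intro: sets_path_large_event)
  also have "\<dots> \<le> (\<Sum>k\<in>L. C3 * (2 * len k / (\<epsilon> * T)) powr \<beta>)"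
    using len_pos \<epsilon> T by (intro sum_mono prob_path_large_event) auto
  also have "\<dots> \<le> C3 * (\<Sum>k\<in>L. 2 * len k / (\<epsilon> * T)) powr \<beta>"
    unfolding sum_distrib_left[symmetric] using len_pos \<epsilon> T \<beta> C3_pos
    by (intro mult_left_mono sum_powr_le_powr_sum) (auto simp: L_def less_imp_le)
  also have "\<dots> \<le> C3 * (2 * (T' - T) / (\<epsilon> * T)) powr \<beta>"
  proof -
    have "0 \<le> sum len L" using len_pos by (intro sum_nonneg) (auto simp: less_imp_le)
    then show ?thesis
      unfolding sum_divide_distrib[symmetric] sum_distrib_left[symmetric]
      using sum_len \<epsilon> T \<beta> C3_pos by (intro mult_left_mono powr_mono2 divide_right_mono) auto
  qed
  finally have "prob E \<le> C3 * (2 * (T' - T) / (\<epsilon> * T)) powr \<beta>" .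
  moreover have "E \<in> sets M"
    unfolding E_def using len_pos by (auto simp: L_def intro!: sets.finite_UN sets_path_large_event)
  moreover have "\<bar>u * X k u \<omega>\<bar> \<le> \<epsilon> * T"
    if "\<omega> \<in> space M - E" "Suc (ell ms T) \<le> k" "k \<le> ell ms T'" "0 < u" "u \<le> ms k" "u < T' - Mpart ms (k - 1)"
    for \<omega> k u
  proof -
    have "k \<in> L" using that by (simp add: L_def)
    then show ?thesis
      using that len_pos by (intro abs_scaled_X_le_outside_path_large_event[of "len k"])
        (auto simp: E_def len_def)
  qed
  ultimately show ?thesis by blast
qed

lemma prob_fluctuation_large:
  assumes T: "T \<ge> 1" "T < T'" "T' \<le> 2 * T" and \<epsilon>: "\<epsilon> > 0"
    and Cc: "\<And>k m. m > 0 \<Longrightarrow> prob {\<omega>\<in>space M. \<epsilon> < \<bar>X k m \<omega>\<bar>} \<le> Cc * m powr -\<delta>"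
  shows "\<exists>B\<in>sets M. prob B \<le> 2 * ((tail_const + var_const / \<epsilon>^2 + Cc) * T powr -decay_exp
                           + C3 * (2 * (T' - T) / (\<epsilon> * T)) powr \<beta>) \<and>
     (\<forall>\<omega>\<in>space M - B. \<forall>t. T \<le> t \<longrightarrow> t < T' \<longrightarrow>
        \<bar>t * St X ms t \<omega>\<bar> \<le> 6 * \<epsilon> * T + 2 * bias_const * T powr (1 - decay_exp) + K0 * (T' - T))"
proof -
  have T0: "T > 0" using T by simp
  obtain E1 where E1: "E1 \<in> sets M" "prob E1 \<le> (tail_const + var_const / \<epsilon>^2 + Cc) * T powr -decay_exp"
    and at_T: "\<And>\<omega>. \<omega> \<in> space M - E1 \<Longrightarrow> \<bar>T * St X ms T \<omega>\<bar> \<le> 2 * \<epsilon> * T + bias_const * T powr (1 - decay_exp)"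
    using prob_abs_scaled_St_large[OF T(1) \<epsilon> Cc] by blast
  obtain E2 where E2: "E2 \<in> sets M" "prob E2 \<le> C3 * ((T' - T) / (\<epsilon> * T)) powr \<beta>"
    and first: "\<And>\<omega> s. \<omega> \<in> space M - E2 \<Longrightarrow> 0 \<le> s \<Longrightarrow> s \<le> T' - T \<Longrightarrow>
        \<bar>(tbar ms T + s) * X (ell ms T) (tbar ms T + s) \<omega> - tbar ms T * X (ell ms T) (tbar ms T) \<omega>\<bar> \<le> \<epsilon> * T"
    using prob_first_block_increment_large[OF T0 T(2) \<epsilon>] by blast
  obtain E3 where E3: "E3 \<in> sets M" "prob E3 \<le> (tail_const + var_const / \<epsilon>^2 + Cc) * T powr -decay_exp"
    and middle: "\<And>\<omega>. \<omega> \<in> space M - E3 \<Longrightarrow> (\<Sum>k=Suc (ell ms T)..<ell ms T'. \<bar>ms k * X k (ms k) \<omega>\<bar>)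
        \<le> 2 * \<epsilon> * T + bias_const * T powr (1 - decay_exp) + K0 * (T' - T)"
    using prob_middle_blocks_large[OF T(1) _ T(3) \<epsilon> Cc] T(2) by auto
  obtain E4 where E4: "E4 \<in> sets M" "prob E4 \<le> C3 * (2 * (T' - T) / (\<epsilon> * T)) powr \<beta>"
    and last: "\<And>\<omega> k u. \<omega> \<in> space M - E4 \<Longrightarrow> Suc (ell ms T) \<le> k \<Longrightarrow> k \<le> ell ms T' \<Longrightarrow> 0 < u \<Longrightarrow>
        u \<le> ms k \<Longrightarrow> u < T' - Mpart ms (k - 1) \<Longrightarrow> \<bar>u * X k u \<omega>\<bar> \<le> \<epsilon> * T"
    using prob_last_blocks_large[OF T0 T(2) \<epsilon>] by blast
  have "C3 * ((T' - T) / (\<epsilon> * T)) powr \<beta> \<le> C3 * (2 * (T' - T) / (\<epsilon> * T)) powr \<beta>"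
    using T \<epsilon> \<beta> C3_pos by (intro mult_left_mono powr_mono2 divide_right_mono) auto
  moreover have "prob (E1 \<union> E2 \<union> E3 \<union> E4) \<le> prob E1 + prob E2 + prob E3 + prob E4"
    using measure_Un_le[of "E1 \<union> E2 \<union> E3" M E4] measure_Un_le[of "E1 \<union> E2" M E3]
      measure_Un_le[of E1 M E2] E1 E2 E3 E4 by auto
  ultimately have "prob (E1 \<union> E2 \<union> E3 \<union> E4) \<le> 2 * ((tail_const + var_const / \<epsilon>^2 + Cc) * T powr -decay_exp
                           + C3 * (2 * (T' - T) / (\<epsilon> * T)) powr \<beta>)"
    using E1(2) E2(2) E3(2) E4(2) by (smt (verit))
  moreover have "\<bar>t * St X ms t \<omega>\<bar> \<le> 6 * \<epsilon> * T + 2 * bias_const * T powr (1 - decay_exp) + K0 * (T' - T)"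
    if \<omega>: "\<omega> \<in> space M - (E1 \<union> E2 \<union> E3 \<union> E4)" and t: "T \<le> t" "t < T'" for \<omega> t
  proof -
    let ?G = "\<lambda>k u. u * X k u \<omega>"
    have "\<bar>block_sum ?G t - block_sum ?G T\<bar>
        \<le> \<epsilon> * T + (2 * \<epsilon> * T + bias_const * T powr (1 - decay_exp) + K0 * (T' - T)) + \<epsilon> * T"
      using \<omega> \<epsilon> T0 by (intro abs_block_sum_diff_le[OF T0 t] first middle last) auto
    moreover have "t * St X ms t \<omega> = block_sum ?G t" "T * St X ms T \<omega> = block_sum ?G T"
      using T0 t by (auto intro: St_eq_block_sum)
    ultimately have "\<bar>t * St X ms t \<omega> - T * St X ms T \<omega>\<bar>
        \<le> \<epsilon> * T + (2 * \<epsilon> * T + bias_const * T powr (1 - decay_exp) + K0 * (T' - T)) + \<epsilon> * T"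
      by simp
    moreover have "\<bar>T * St X ms T \<omega>\<bar> \<le> 2 * \<epsilon> * T + bias_const * T powr (1 - decay_exp)"
      using at_T \<omega> by blast
    ultimately show ?thesis by linarith
  qed
  ultimately show ?thesis using E1 E2 E3 E4 by (intro bexI[of _ "E1 \<union> E2 \<union> E3 \<union> E4"]) auto
qed

lemma grid_block_event:
  fixes p :: real and j :: nat
  defines "c \<equiv> p * exp p / (real j + 1)"
  assumes \<epsilon>: "\<epsilon> > 0"
    and Cc: "\<And>k m. m > 0 \<Longrightarrow> prob {\<omega>\<in>space M. \<epsilon> < \<bar>X k m \<omega>\<bar>} \<le> Cc * m powr -\<delta>"
    and p: "p \<ge> 1" "p * decay_exp \<ge> 2"
    and j: "c \<le> 1" "K0 * c \<le> \<epsilon>" "2 * bias_const * (real j + 1) powr -2 \<le> \<epsilon>"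
  shows "\<exists>B\<in>sets M. prob B \<le> 2 * ((tail_const + var_const / \<epsilon>^2 + Cc) * (real j + 1) powr -2
                                  + C3 * (2 * c / \<epsilon>) powr \<beta>) \<and>
     (\<forall>\<omega>\<in>space M - B. \<forall>t. (real j + 1) powr p \<le> t \<longrightarrow> t < (real (Suc j) + 1) powr p \<longrightarrow>
        \<bar>St X ms t \<omega>\<bar> \<le> 8 * \<epsilon>)"
proof -
  define T where "T = (real j + 1) powr p"
  define T' where "T' = (real (Suc j) + 1) powr p"
  have T: "T \<ge> 1" using p by (simp add: T_def ge_one_powr_ge_zero)
  have TT': "T < T'" using p by (simp add: T_def T'_def powr_less_mono2)
  have "(T' - T) / T = ((real j + 2) / (real j + 1)) powr p - 1"
    using T by (simp add: T_def T'_def diff_divide_distrib powr_divide add.commute)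
  also have "\<dots> \<le> c" unfolding c_def by (rule Suc_ratio_powr_le[OF p(1)])
  finally have ratio: "(T' - T) / T \<le> c" .
  then have gap: "T' - T \<le> c * T" using T by (simp add: divide_le_eq)
  have "T powr -decay_exp = (real j + 1) powr (p * -decay_exp)"
    unfolding T_def by (rule powr_powr)
  also have "\<dots> \<le> (real j + 1) powr -2"
    using p by (intro powr_mono) auto
  finally have decay: "T powr -decay_exp \<le> (real j + 1) powr -2" .
  have "c * T \<le> T" using j(1) T by (simp add: mult_le_cancel_right1)
  then have "T' \<le> 2 * T" using gap by linarith
  obtain B where B: "B \<in> sets M"
    and prob_B: "prob B \<le> 2 * ((tail_const + var_const / \<epsilon>^2 + Cc) * T powr -decay_exp
                           + C3 * (2 * (T' - T) / (\<epsilon> * T)) powr \<beta>)"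
    and bound: "\<And>\<omega> t. \<omega> \<in> space M - B \<Longrightarrow> T \<le> t \<Longrightarrow> t < T' \<Longrightarrow>
        \<bar>t * St X ms t \<omega>\<bar> \<le> 6 * \<epsilon> * T + 2 * bias_const * T powr (1 - decay_exp) + K0 * (T' - T)"
    using prob_fluctuation_large[OF T TT' \<open>T' \<le> 2 * T\<close> \<epsilon> Cc] by blast
  show ?thesis
  proof (intro bexI[OF _ B] conjI ballI allI impI)
    have "(tail_const + var_const / \<epsilon>^2 + Cc) * T powr -decay_exp
        \<le> (tail_const + var_const / \<epsilon>^2 + Cc) * (real j + 1) powr -2"
      using decay tail_const_nonneg var_const_nonneg small_prob_const_nonneg[OF Cc]
      by (intro mult_left_mono) auto
    moreover have "C3 * (2 * (T' - T) / (\<epsilon> * T)) powr \<beta> \<le> C3 * (2 * c / \<epsilon>) powr \<beta>"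
    proof (intro mult_left_mono powr_mono2)
      have "2 * (T' - T) / (\<epsilon> * T) = 2 / \<epsilon> * ((T' - T) / T)" by simp
      also have "\<dots> \<le> 2 / \<epsilon> * c" using ratio \<epsilon> by (intro mult_left_mono) auto
      finally show "2 * (T' - T) / (\<epsilon> * T) \<le> 2 * c / \<epsilon>" by simp
    qed (use TT' T \<epsilon> C3_pos \<beta> in auto)
    ultimately show "prob B \<le> 2 * ((tail_const + var_const / \<epsilon>^2 + Cc) * (real j + 1) powr -2
                                  + C3 * (2 * c / \<epsilon>) powr \<beta>)"
      using prob_B by (smt (verit))
    fix \<omega> t assume \<omega>: "\<omega> \<in> space M - B" and t: "(real j + 1) powr p \<le> t" "t < (real (Suc j) + 1) powr p"
    have "2 * bias_const * T powr (1 - decay_exp) = (2 * bias_const * T powr -decay_exp) * T"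
      using T powr_add[of T 1 "-decay_exp"] by simp
    also have "\<dots> \<le> \<epsilon> * T"
    proof (intro mult_right_mono)
      show "2 * bias_const * T powr -decay_exp \<le> \<epsilon>"
        using decay bias_const_nonneg j(3) by (smt (verit) mult_left_mono)
    qed (use T in simp)
    finally have bias: "2 * bias_const * T powr (1 - decay_exp) \<le> \<epsilon> * T" .
    have "K0 * (T' - T) \<le> K0 * (c * T)" using gap K0_nonneg by (rule mult_left_mono)
    also have "\<dots> = (K0 * c) * T" by simp
    also have "\<dots> \<le> \<epsilon> * T" using j(2) T by (intro mult_right_mono) auto
    finally have "\<bar>t * St X ms t \<omega>\<bar> \<le> 8 * \<epsilon> * T"
      using bound[OF \<omega>, of t] t bias unfolding T_def[symmetric] T'_def[symmetric] by linarith
    also have "\<dots> \<le> 8 * \<epsilon> * t" using t \<epsilon> unfolding T_def[symmetric] by simp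
    finally show "\<bar>St X ms t \<omega>\<bar> \<le> 8 * \<epsilon>"
      using t T unfolding T_def[symmetric] by (simp add: abs_mult mult.commute mult_le_cancel_left_pos)
  qed
qed

lemma AE_eventually_abs_St_le:
  assumes \<epsilon>: "\<epsilon> > 0"
  shows "AE \<omega> in M. eventually (\<lambda>t. \<bar>St X ms t \<omega>\<bar> \<le> 8 * \<epsilon>) at_top"
proof -
  obtain Cc where Cc: "\<And>k m. m > 0 \<Longrightarrow> prob {\<omega>\<in>space M. \<epsilon> < \<bar>X k m \<omega>\<bar>} \<le> Cc * m powr -\<delta>"
    using small_prob[OF \<epsilon>] by blast
  define p where "p = 2 / decay_exp + 1"
  have p: "p \<ge> 1" "p * decay_exp \<ge> 2"
    using decay_exp_pos by (auto simp: p_def field_simps)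
  define c where "c j = p * exp p / (real j + 1)" for j :: nat
  define b where "b j = 2 * ((tail_const + var_const / \<epsilon>^2 + Cc) * (real j + 1) powr -2
                        + C3 * (2 * c j / \<epsilon>) powr \<beta>)" for j :: nat
  have lin: "filterlim (\<lambda>j. real j + 1) at_top sequentially"
    using filterlim_tendsto_add_at_top[OF tendsto_const filterlim_real_sequentially, of 1]
    by (simp add: add.commute)
  have c_to_0: "c \<longlonglongrightarrow> 0"
    unfolding c_def by (rule real_tendsto_divide_at_top[OF tendsto_const lin])
  have powr_Suc: "(\<lambda>j. (real j + 1) powr -a) = (\<lambda>j. real (Suc j) powr -a)" for a
    by (simp add: add.commute)
  have summable_powr: "summable (\<lambda>j. (real j + 1) powr -a)" if "a > 1" for a
    unfolding powr_Suc using that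
    by (intro summable_Suc_iff[where f="\<lambda>n. real n powr -a", THEN iffD2])
       (simp add: summable_real_powr_iff)
  have "(2 * c j / \<epsilon>) powr \<beta> = (2 * p * exp p / \<epsilon>) powr \<beta> * (real j + 1) powr -\<beta>" for j
  proof -
    have "2 * c j / \<epsilon> = (2 * p * exp p / \<epsilon>) / (real j + 1)"
      using \<epsilon> by (simp add: c_def field_simps)
    then have "(2 * c j / \<epsilon>) powr \<beta> = (2 * p * exp p / \<epsilon>) powr \<beta> / (real j + 1) powr \<beta>"
      using p \<epsilon> by (simp only:) (rule powr_divide; auto)
    then show ?thesis by (simp add: powr_minus divide_inverse)
  qed
  then have summable_b: "summable b"
    unfolding b_def using summable_powr[of 2] summable_powr[OF \<beta>(1)]
    by (intro summable_mult summable_add) auto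
  have mono: "mono (\<lambda>j. (real j + 1) powr p)"
    using p by (intro monoI powr_mono2) auto
  have unbounded: "real j \<le> (real j + 1) powr p" for j
  proof -
    have "(real j + 1) powr 1 \<le> (real j + 1) powr p" using p by (intro powr_mono) auto
    then show ?thesis by simp
  qed
  have "eventually (\<lambda>j. c j \<le> 1 \<and> K0 * c j \<le> \<epsilon> \<and> 2 * bias_const * (real j + 1) powr -2 \<le> \<epsilon>)
      sequentially"
  proof -
    have "((\<lambda>j. (real j + 1) powr -2) \<longlongrightarrow> 0) sequentially"
      by (intro tendsto_neg_powr lin) simp
    then have "eventually (\<lambda>j. 2 * bias_const * (real j + 1) powr -2 < \<epsilon>) sequentially"
      using tendsto_mult_right_zero \<epsilon> by (intro order_tendstoD(2)) auto
    moreover have "eventually (\<lambda>j. K0 * c j < \<epsilon>) sequentially"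
      using tendsto_mult_right_zero[OF c_to_0] \<epsilon> by (intro order_tendstoD(2)) auto
    moreover have "eventually (\<lambda>j. c j < 1) sequentially"
      using c_to_0 by (intro order_tendstoD(2)) auto
    ultimately show ?thesis
      by eventually_elim auto
  qed
  then have "eventually (\<lambda>j. \<exists>B\<in>sets M. prob B \<le> b j \<and> (\<forall>\<omega>\<in>space M - B. \<forall>t.
      (real j + 1) powr p \<le> t \<longrightarrow> t < (real (Suc j) + 1) powr p \<longrightarrow> \<bar>St X ms t \<omega>\<bar> \<le> 8 * \<epsilon>)) sequentially"
    unfolding b_def c_def by (rule eventually_mono) (intro grid_block_event[OF \<epsilon> Cc p]; simp)
  then show ?thesis by (rule AE_eventually_at_top_of_block_events[OF mono unbounded summable_b])
qed

theorem AE_St_tendsto_0: "AE \<omega> in M. ((\<lambda>t. St X ms t \<omega>) \<longlongrightarrow> 0) at_top"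
  using AE_eventually_abs_St_le[of "\<epsilon> / 8" for \<epsilon>]
  by (intro AE_tendsto_0_of_AE_eventually_abs_le) simp

end

context prob_space
begin

lemma small_prob_of_SUP_bound:
  fixes X :: "nat \<Rightarrow> real \<Rightarrow> 'a \<Rightarrow> real"
  assumes "\<exists>\<delta>>0. \<forall>\<epsilon>>0. \<exists>Cc. \<forall>m>0.
             (SUP k. measure M {\<omega>\<in>space M. \<bar>X k m \<omega>\<bar> > \<epsilon>}) < Cc / m powr \<delta>"
  shows "\<exists>\<delta>>0. \<forall>\<epsilon>>0. \<exists>Cc. \<forall>k m. m > 0 \<longrightarrow> prob {\<omega>\<in>space M. \<epsilon> < \<bar>X k m \<omega>\<bar>} \<le> Cc * m powr -\<delta>"
proof -
  obtain \<delta> where \<delta>: "\<delta> > 0" and bound: "\<And>\<epsilon>. \<epsilon> > 0 \<Longrightarrow> \<exists>Cc. \<forall>m>0.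
      (SUP k. measure M {\<omega>\<in>space M. \<bar>X k m \<omega>\<bar> > \<epsilon>}) < Cc / m powr \<delta>"
    using assms by blast
  have "\<exists>Cc. \<forall>k m. m > 0 \<longrightarrow> prob {\<omega>\<in>space M. \<epsilon> < \<bar>X k m \<omega>\<bar>} \<le> Cc * m powr -\<delta>" if \<epsilon>: "\<epsilon> > 0" for \<epsilon>
  proof -
    obtain Cc where Cc: "\<And>m. m > 0 \<Longrightarrow> (SUP k. measure M {\<omega>\<in>space M. \<bar>X k m \<omega>\<bar> > \<epsilon>}) < Cc / m powr \<delta>"
      using bound[OF \<epsilon>] by blast
    have "prob {\<omega>\<in>space M. \<epsilon> < \<bar>X k m \<omega>\<bar>} \<le> Cc * m powr -\<delta>" if "m > 0" for k m
    proof -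
      have "prob {\<omega>\<in>space M. \<epsilon> < \<bar>X k m \<omega>\<bar>} \<le> (SUP k. measure M {\<omega>\<in>space M. \<bar>X k m \<omega>\<bar> > \<epsilon>})"
        by (rule prob_le_SUP_prob[where A="\<lambda>k. {\<omega>\<in>space M. \<epsilon> < \<bar>X k m \<omega>\<bar>}"]) simp
      also have "\<dots> \<le> Cc / m powr \<delta>" using Cc[OF that] by simp
      finally show ?thesis by (simp add: powr_minus divide_inverse)
    qed
    then show ?thesis by blast
  qed
  with \<delta> show ?thesis by blast
qed

lemma sup_increment_bound_of_SUP_bound:
  fixes X :: "nat \<Rightarrow> real \<Rightarrow> 'a \<Rightarrow> real"
  assumes "\<forall>\<epsilon>>0. \<exists>\<beta>>1. \<exists>Ce>0. \<forall>t>0. \<forall>r>0. \<forall>m>0.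
             (SUP k. measure M {\<omega>\<in>space M.
                 (SUP s\<in>{0..m}. ereal \<bar>(r+s) * X k (r+s) \<omega> - r * X k r \<omega>\<bar>) \<ge> ereal (t * \<epsilon>)})
               \<le> Ce * m powr \<beta> / t powr \<beta>"
  shows "\<exists>\<beta> C3. 1 < \<beta> \<and> \<beta> < 2 \<and> C3 > 0 \<and> (\<forall>k r m t. r > 0 \<longrightarrow> m > 0 \<longrightarrow> t > 0 \<longrightarrow>
           prob {\<omega>\<in>space M. ereal t \<le> sup_increment X k r m \<omega>} \<le> C3 * (m / t) powr \<beta>)"
proof -
  obtain \<beta> Ce where \<beta>: "\<beta> > 1" and Ce: "Ce > 0"
    and bound: "\<And>t r m. t > 0 \<Longrightarrow> r > 0 \<Longrightarrow> m > 0 \<Longrightarrow>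
      (SUP k. measure M {\<omega>\<in>space M.
          (SUP s\<in>{0..m}. ereal \<bar>(r+s) * X k (r+s) \<omega> - r * X k r \<omega>\<bar>) \<ge> ereal t})
        \<le> Ce * m powr \<beta> / t powr \<beta>"
    using assms[rule_format, of 1] by auto
  have "prob {\<omega>\<in>space M. ereal t \<le> sup_increment X k r m \<omega>} \<le> max Ce 1 * (m / t) powr min \<beta> (3/2)"
    if r: "r > 0" and m: "m > 0" and t: "t > 0" for k r m t
  proof (rule le_max_mult_powr_of_le_powr)
    have "prob {\<omega>\<in>space M. ereal t \<le> sup_increment X k r m \<omega>}
        \<le> (SUP k. measure M {\<omega>\<in>space M.
          (SUP s\<in>{0..m}. ereal \<bar>(r+s) * X k (r+s) \<omega> - r * X k r \<omega>\<bar>) \<ge> ereal t})"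
      unfolding sup_increment_def
      by (rule prob_le_SUP_prob[where A="\<lambda>k. {\<omega>\<in>space M.
          (SUP s\<in>{0..m}. ereal \<bar>(r+s) * X k (r+s) \<omega> - r * X k r \<omega>\<bar>) \<ge> ereal t}"]) simp
    also have "\<dots> \<le> Ce * (m / t) powr \<beta>"
      using bound[OF t r m] m t by (simp add: powr_divide)
    finally show "prob {\<omega>\<in>space M. ereal t \<le> sup_increment X k r m \<omega>} \<le> Ce * (m / t) powr \<beta>" .
  qed (use m t \<beta> in auto)
  then show ?thesis using \<beta> Ce by (intro exI[of _ "min \<beta> (3/2)"] exI[of _ "max Ce 1"]) auto
qed

lemma L1_bound_of_dominating_tail:
  fixes X :: "nat \<Rightarrow> real \<Rightarrow> 'a \<Rightarrow> real"
  assumes "\<exists>N :: real measure. \<exists>\<gamma>>0. prob_space N \<and> sets N = sets borel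
             \<and> integrable N (\<lambda>x. \<bar>x\<bar> powr (2 + \<gamma>))
             \<and> (\<forall>x. (SUP km\<in>UNIV \<times> {0<..}. measure M {\<omega>\<in>space M. X (fst km) (snd km) \<omega> > x})
                      \<le> measure N {x<..})"
    and integ: "\<And>k m. m > 0 \<Longrightarrow> integrable M (X k m)"
    and mean_zero: "\<And>k m. m > 0 \<Longrightarrow> expectation (X k m) = 0"
  shows "\<exists>K0. \<forall>k m. m > 0 \<longrightarrow> expectation (\<lambda>\<omega>. \<bar>X k m \<omega>\<bar>) \<le> K0"
proof -
  obtain N :: "real measure" and \<gamma> where \<gamma>: "\<gamma> > 0" and N: "prob_space N" "sets N = sets borel"
    and int_N: "integrable N (\<lambda>x. \<bar>x\<bar> powr (2 + \<gamma>))"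
    and tail: "\<And>x. (SUP km\<in>UNIV \<times> {0<..}. measure M {\<omega>\<in>space M. X (fst km) (snd km) \<omega> > x})
                      \<le> measure N {x<..}"
    using assms(1) by blast
  have int_abs: "integrable N (\<lambda>x. \<bar>x\<bar>)"
    using \<gamma> by (intro integrable_abs_of_integrable_powr[OF prob_space.axioms(1)[OF N(1)] N(2) _ int_N]) auto
  have "expectation (\<lambda>\<omega>. \<bar>X k m \<omega>\<bar>) \<le> 2 * (integral\<^sup>L N (\<lambda>x. \<bar>x\<bar>) + 1)" if m: "m > 0" for k m
  proof (rule expectation_abs_le_of_dominated_upper_tail[OF N int_abs integ[OF m] mean_zero[OF m]])
    fix x
    have "prob {\<omega>\<in>space M. x < X k m \<omega>}
        \<le> (SUP km\<in>UNIV \<times> {0<..}. measure M {\<omega>\<in>space M. X (fst km) (snd km) \<omega> > x})"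
      using m by (intro prob_le_SUP_prob[where A="\<lambda>km. {\<omega>\<in>space M. x < X (fst km) (snd km) \<omega>}"
            and i="(k, m)", simplified]) auto
    also have "\<dots> \<le> measure N {x<..}" by (rule tail)
    finally show "prob {\<omega>\<in>space M. x < X k m \<omega>} \<le> measure N {x<..}" .
  qed
  then show ?thesis by blast
qed

end

theorem theorem2p3:
  fixes M :: "'a measure"
    and X :: "nat \<Rightarrow> real \<Rightarrow> 'a \<Rightarrow> real"
    and ms :: "nat \<Rightarrow> real"
  assumes P: "prob_space M"
    and integ: "\<And>k m. m > 0 \<Longrightarrow> integrable M (X k m)"
    and indep: "prob_space.indep_vars M (\<lambda>_. Pi\<^sub>M {0<..} (\<lambda>_. borel))
                  (\<lambda>k \<omega>. restrict (\<lambda>m. X k m \<omega>) {0<..}) UNIV"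
    and C: "\<And>k m. m > 0 \<Longrightarrow> integral\<^sup>L M (X k m) = 0"
    and S1: "\<exists>\<delta>>0. \<forall>\<epsilon>>0. \<exists>Cc. \<forall>m>0.
               (SUP k. measure M {\<omega>\<in>space M. \<bar>X k m \<omega>\<bar> > \<epsilon>}) < Cc / m powr \<delta>"
    and S2: "\<exists>N :: real measure. \<exists>\<gamma>>0. prob_space N \<and> sets N = sets borel
               \<and> integrable N (\<lambda>x. \<bar>x\<bar> powr (2 + \<gamma>))
               \<and> (\<forall>x. (SUP km\<in>UNIV \<times> {0<..}. measure M {\<omega>\<in>space M. X (fst km) (snd km) \<omega> > x})
                        \<le> measure N {x<..})"
    and S3meas: "\<And>k r m c. r > 0 \<Longrightarrow> m > 0 \<Longrightarrow>
               {\<omega>\<in>space M. (SUP s\<in>{0..m}. ereal \<bar>(r+s) * X k (r+s) \<omega> - r * X k r \<omega>\<bar>) \<ge> ereal c}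
                 \<in> sets M"
    and S3: "\<forall>\<epsilon>>0. \<exists>\<beta>>1. \<exists>Ce>0. \<forall>t>0. \<forall>r>0. \<forall>m>0.
               (SUP k. measure M {\<omega>\<in>space M.
                   (SUP s\<in>{0..m}. ereal \<bar>(r+s) * X k (r+s) \<omega> - r * X k r \<omega>\<bar>) \<ge> ereal (t * \<epsilon>)})
                 \<le> Ce * m powr \<beta> / t powr \<beta>"
    and mpos: "\<And>k. k \<ge> 1 \<Longrightarrow> ms k > 0"
    and mdiv: "filterlim (Mpart ms) at_top sequentially"
  shows "AE \<omega> in M. ((\<lambda>t. St X ms t \<omega>) \<longlongrightarrow> 0) at_top"
proof -
  interpret prob_space M by (rule P)
  obtain \<delta> where \<delta>: "\<delta> > 0"
    and small: "\<And>\<epsilon>. \<epsilon> > 0 \<Longrightarrow> \<exists>Cc. \<forall>k m. m > 0 \<longrightarrow> prob {\<omega>\<in>space M. \<epsilon> < \<bar>X k m \<omega>\<bar>} \<le> Cc * m powr -\<delta>"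
    using small_prob_of_SUP_bound[OF S1] by blast
  obtain \<beta> C3 where \<beta>: "1 < \<beta>" "\<beta> < 2" "C3 > 0"
    and increment: "\<And>k r m t. r > 0 \<Longrightarrow> m > 0 \<Longrightarrow> t > 0 \<Longrightarrow>
          prob {\<omega>\<in>space M. ereal t \<le> sup_increment X k r m \<omega>} \<le> C3 * (m / t) powr \<beta>"
    using sup_increment_bound_of_SUP_bound[OF S3] by blast
  obtain K0 where L1: "\<And>k m. m > 0 \<Longrightarrow> expectation (\<lambda>\<omega>. \<bar>X k m \<omega>\<bar>) \<le> K0"
    using L1_bound_of_dominating_tail[OF S2 integ C] by blast
  interpret slln_setting M ms X \<beta> C3 \<delta> K0
    using integ indep C \<delta> small \<beta> S3meas increment L1 mpos mdiv
    by unfold_locales (auto simp: sup_increment_def)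
  show ?thesis by (rule AE_St_tendsto_0)
qed

end
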